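(* In the setting described in the context, let $J\in\mathcal{A}(\Gamma)$ and $p\in\{0,\dots,r\}$, and assume that $u(\beta_k)=\pm\alpha_p$ for some $k\in[q]$. Let $\vec H$ be the oriented hyperplane $H_{\alpha_p,\,c}$ with $c:=\mathrm{sgn}(u^{-1}(\alpha_p))\,m_k$, whose positive side is $\{\nu:\langle\nu,\alpha_p^\vee\rangle>c\}$ and negative side $\{\nu:\langle\nu,\alpha_p^\vee\rangle<c\}$. Then: (1) $u^{-1}(\alpha_p)>0$ if and only if the alcove $A^J_{\overline t}$ lies on the positive side of $\vec H$; (2) $w^{-1}(\alpha_p)<0$ if and only if the alcove $A^J_q$ lies on the positive side of $\vec H$.
   Context: $\Phi$ is an irreducible (finite, crystallographic) root system with positive roots $\Phi^+$, simple roots $\alpha_1,\dots,\alpha_r$, Weyl group $W$, length $\ell$, inner product $\langle\cdot,\cdot\rangle$ on the real span $V$, coroots $\alpha^\vee=2\alpha/\langle\alpha,\alpha\rangle$, $\mathrm{ht}(\alpha^\vee)$ the sum of coefficients in the simple coroots; $\alpha_0:=-\widetilde\alpha$ with $\widetilde\alpha$ the highest root; $\mathrm{sgn}(\alpha)=\pm1$ for positive/negative roots. $\mathrm{QB}(W)$ has edges $w\xrightarrow{\alpha}ws_\alpha$ ($\alpha\in\Phi^+$) when $\ell(ws_\alpha)=\ell(w)+1$ or $\ell(ws_\alpha)=\ell(w)-2\mathrm{ht}(\alpha^\vee)+1$. $H_{\alpha,k}=\{\nu:\langle\nu,\alpha^\vee\rangle=k\}$, $s_{\alpha,k}$ the affine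 reflection in it. Alcoves are the components of $V\setminus\bigcup H_{\alpha,k}$, $A_\circ=\{\nu:0<\langle\nu,\alpha^\vee\rangle<1\ \forall\alpha>0\}$, $A_{-\lambda}=A_\circ-\lambda$; $A\xrightarrow{\beta}B$ for adjacent alcoves with common wall in some $H_{\beta,k}$ and $\beta$ pointing from $A$ to $B$. For dominant $\lambda$, a $\lambda$-chain is a sequence of roots $(\beta_i)$ indexed by a totally ordered set such that $A_\circ\to\cdots\to A_{-\lambda}$, with steps labeled $-\beta_i$, is a minimal length alcove path. Setting: $I=\{\overline1<\cdots<\overline t<1<\cdots<q<\overline{t+1}<\cdots<\overline n\}$, $\Gamma=(\beta_i)_{i\in I}$ a $\lambda$-chain with $\{\beta_1,\dots,\beta_q\}$ exactly the positive roots (without repetition) of a rank 2 root subsystem. $r_i=s_{\beta_i}$, $l_i=|\{j<i:\beta_j=\beta_i\}|$, $\widehat r_i=s_{\beta_i,-l_i}$. A subset $J=\{j_1<\cdots<j_s\}\subseteq I$ is admissible if $1\xrightarrow{\beta_{j_1}}r_{j_1}\to\cdots\xrightarrow{\beta_{j_s}}r_{j_1}\cdots r_{j_s}$ is a path in $\mathrm{QB}(W)$; $\mathcal{A}(\Gamma)$ is the set of admissible subsets. For $J$ let $u$ and $\widehat u$ be the products $r_{j}$, resp. $\widehat r_j$, over $j\in J\cap\{\overline1,\dots,\overline t\}$ in increasing order, and $w$, $\widehat w$ the analogous products over $j\in J\cap(\{\overline1,\dots,\overline t\}\cup[q])$. Define $m_i$ for $i\in[q]$ by $\widehat u(H_{\beta_i,-l_i})=H_{u(\beta_i),m_i}$.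 Let $A^\emptyset_i$ ($i\in I$) be the alcove reached after step $i$ of the alcove path of $\Gamma$ (with $A^\emptyset_{\overline 0}:=A_\circ$ before the first step), and let the gallery of $J$ have alcoves $A^J_i:=\widehat r_{j_1}\cdots\widehat r_{j_p}(A^\emptyset_i)$, where $j_1<\cdots<j_p$ are the elements of $J$ that are $\le i$ (equivalently, the gallery obtained from the unfolded one by successively folding along the faces at positions $j_s,\dots,j_1$). In particular $A^J_{\overline t}=\widehat u(A^\emptyset_{\overline t})$ and $A^J_q=\widehat w(A^\emptyset_q)$. *)

theory Defs
  imports "HOL-Analysis.Analysis"
begin

definition coroot :: "'a::euclidean_space \<Rightarrow> 'a" where
  "coroot \<alpha> = (2 / (\<alpha> \<bullet> \<alpha>)) *\<^sub>R \<alpha>"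

definition pairing :: "'a::euclidean_space \<Rightarrow> 'a \<Rightarrow> real" where
  "pairing \<nu> \<alpha> = \<nu> \<bullet> coroot \<alpha>"

definition refl :: "'a::euclidean_space \<Rightarrow> 'a \<Rightarrow> 'a" where
  "refl \<alpha> \<nu> = \<nu> - pairing \<nu> \<alpha> *\<^sub>R \<alpha>"

definition aff_refl :: "'a::euclidean_space \<Rightarrow> real \<Rightarrow> 'a \<Rightarrow> 'a" where
  "aff_refl \<alpha> k \<nu> = \<nu> - (pairing \<nu> \<alpha> - k) *\<^sub>R \<alpha>"

definition hyp :: "'a::euclidean_space \<Rightarrow> real \<Rightarrow> 'a set" where
  "hyp \<alpha> k = {\<nu>. pairing \<nu> \<alpha> = k}"

definition root_system :: "'a::euclidean_space set \<Rightarrow> bool" where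
  "root_system R \<longleftrightarrow> finite R \<and> 0 \<notin> R \<and> span R = UNIV \<and>
     (\<forall>\<alpha>\<in>R. \<forall>\<beta>\<in>R. refl \<alpha> \<beta> \<in> R) \<and>
     (\<forall>\<alpha>\<in>R. \<forall>\<beta>\<in>R. pairing \<beta> \<alpha> \<in> \<int>) \<and>
     (\<forall>\<alpha>\<in>R. \<forall>c. c *\<^sub>R \<alpha> \<in> R \<longrightarrow> c = 1 \<or> c = -1)"

definition irreducible_rs :: "'a::euclidean_space set \<Rightarrow> bool" where
  "irreducible_rs R \<longleftrightarrow> R \<noteq> {} \<and>
     \<not> (\<exists>R1 R2. R1 \<noteq> {} \<and> R2 \<noteq> {} \<and> R1 \<union> R2 = R \<and> (\<forall>x\<in>R1. \<forall>y\<in>R2. x \<bullet> y = 0))"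

definition is_base :: "'a::euclidean_space set \<Rightarrow> 'a set \<Rightarrow> bool" where
  "is_base R S \<longleftrightarrow> S \<subseteq> R \<and> independent S \<and>
     (\<forall>\<beta>\<in>R. \<exists>c. (\<forall>\<alpha>\<in>S. c \<alpha> \<in> \<int>) \<and>
        ((\<forall>\<alpha>\<in>S. c \<alpha> \<ge> 0) \<or> (\<forall>\<alpha>\<in>S. c \<alpha> \<le> 0)) \<and>
        \<beta> = (\<Sum>\<alpha>\<in>S. c \<alpha> *\<^sub>R \<alpha>))"

definition nonneg_comb :: "'a::euclidean_space set \<Rightarrow> 'a \<Rightarrow> bool" where
  "nonneg_comb S v \<longleftrightarrow> (\<exists>c. (\<forall>\<alpha>\<in>S. c \<alpha> \<ge> 0) \<and> v = (\<Sum>\<alpha>\<in>S. c \<alpha> *\<^sub>R \<alpha>))"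

definition pos_roots :: "'a::euclidean_space set \<Rightarrow> 'a set \<Rightarrow> 'a set" where
  "pos_roots R S = {\<beta>\<in>R. nonneg_comb S \<beta>}"

definition sgn_root :: "'a::euclidean_space set \<Rightarrow> 'a set \<Rightarrow> 'a \<Rightarrow> real" where
  "sgn_root R S \<beta> = (if \<beta> \<in> pos_roots R S then 1 else -1)"

definition highest_root :: "'a::euclidean_space set \<Rightarrow> 'a set \<Rightarrow> 'a" where
  "highest_root R S = (THE \<theta>. \<theta> \<in> R \<and> (\<forall>\<beta>\<in>R. nonneg_comb S (\<theta> - \<beta>)))"

definition coroot_height :: "'a::euclidean_space set \<Rightarrow> 'a \<Rightarrow> real" where
  "coroot_height S \<alpha> =
     (\<Sum>a\<in>S. (THE c. (\<forall>x. x \<notin> S \<longrightarrow> c x = 0) \<and>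
                     coroot \<alpha> = (\<Sum>b\<in>S. c b *\<^sub>R coroot b)) a)"

definition refl_prod :: "'a::euclidean_space list \<Rightarrow> 'a \<Rightarrow> 'a" where
  "refl_prod xs = foldr (\<lambda>\<alpha> f. refl \<alpha> \<circ> f) xs id"

definition weyl_length :: "'a::euclidean_space set \<Rightarrow> ('a \<Rightarrow> 'a) \<Rightarrow> nat" where
  "weyl_length S w = (LEAST n. \<exists>xs. set xs \<subseteq> S \<and> length xs = n \<and> w = refl_prod xs)"

definition qb_edge :: "'a::euclidean_space set \<Rightarrow> 'a set \<Rightarrow> ('a \<Rightarrow> 'a) \<Rightarrow> 'a \<Rightarrow> ('a \<Rightarrow> 'a) \<Rightarrow> bool" where
  "qb_edge R S w \<alpha> w' \<longleftrightarrow> \<alpha> \<in> pos_roots R S \<and> w' = w \<circ> refl \<alpha> \<and>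
     (weyl_length S w' = weyl_length S w + 1 \<or>
      real (weyl_length S w') = real (weyl_length S w) - 2 * coroot_height S \<alpha> + 1)"

definition walls :: "'a::euclidean_space set \<Rightarrow> 'a set" where
  "walls R = (\<Union>\<alpha>\<in>R. \<Union>k::int. hyp \<alpha> (of_int k))"

definition is_alcove :: "'a::euclidean_space set \<Rightarrow> 'a set \<Rightarrow> bool" where
  "is_alcove R A \<longleftrightarrow> A \<in> components (UNIV - walls R)"

definition fund_alcove :: "'a::euclidean_space set \<Rightarrow> 'a set \<Rightarrow> 'a set" where
  "fund_alcove R S = {\<nu>. \<forall>\<alpha>\<in>pos_roots R S. 0 < pairing \<nu> \<alpha> \<and> pairing \<nu> \<alpha> < 1}"

definition alcove_edge :: "'a::euclidean_space set \<Rightarrow> 'a set \<Rightarrow> 'a \<Rightarrow> 'a set \<Rightarrow> bool" where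
  "alcove_edge R A \<beta> B \<longleftrightarrow> is_alcove R A \<and> is_alcove R B \<and> \<beta> \<in> R \<and>
     (\<exists>k::int. B = aff_refl \<beta> (of_int k) ` A \<and>
        aff_dim (closure A \<inter> hyp \<beta> (of_int k)) = int DIM('a) - 1 \<and>
        (\<forall>\<nu>\<in>A. pairing \<nu> \<beta> < of_int k))"

definition alcove_path :: "'a::euclidean_space set \<Rightarrow> 'a set list \<Rightarrow> bool" where
  "alcove_path R As \<longleftrightarrow> (\<forall>i. Suc i < length As \<longrightarrow> (\<exists>\<beta>. alcove_edge R (As ! i) \<beta> (As ! Suc i)))"

(* alcoves of the path of Gamma: chain_alcoves .. 0 = A_circ, chain_alcoves .. (Suc i) = alcove after
   the step at list position i (labelled -Gamma!i) *)
primrec chain_alcoves :: "'a::euclidean_space set \<Rightarrow> 'a set \<Rightarrow> 'a list \<Rightarrow> nat \<Rightarrow> 'a set" where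
  "chain_alcoves R S \<Gamma> 0 = fund_alcove R S"
| "chain_alcoves R S \<Gamma> (Suc i) = (THE B. alcove_edge R (chain_alcoves R S \<Gamma> i) (- (\<Gamma> ! i)) B)"

definition dominant :: "'a::euclidean_space set \<Rightarrow> 'a set \<Rightarrow> 'a \<Rightarrow> bool" where
  "dominant R S lam \<longleftrightarrow> (\<forall>\<alpha>\<in>R. pairing lam \<alpha> \<in> \<int>) \<and> (\<forall>\<alpha>\<in>pos_roots R S. pairing lam \<alpha> \<ge> 0)"

definition lambda_chain :: "'a::euclidean_space set \<Rightarrow> 'a set \<Rightarrow> 'a \<Rightarrow> 'a list \<Rightarrow> bool" where
  "lambda_chain R S lam \<Gamma> \<longleftrightarrow>
     (\<forall>i<length \<Gamma>. \<Gamma> ! i \<in> R \<and>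
        alcove_edge R (chain_alcoves R S \<Gamma> i) (- (\<Gamma> ! i)) (chain_alcoves R S \<Gamma> (Suc i))) \<and>
     chain_alcoves R S \<Gamma> (length \<Gamma>) = (\<lambda>\<nu>. \<nu> - lam) ` fund_alcove R S \<and>
     (\<forall>As. As \<noteq> [] \<and> alcove_path R As \<and> hd As = fund_alcove R S \<and>
           last As = (\<lambda>\<nu>. \<nu> - lam) ` fund_alcove R S \<longrightarrow> length \<Gamma> \<le> length As - 1)"

definition root_subsystem :: "'a::euclidean_space set \<Rightarrow> 'a set \<Rightarrow> bool" where
  "root_subsystem R R' \<longleftrightarrow> R' \<subseteq> R \<and> R' \<noteq> {} \<and> (\<forall>\<alpha>\<in>R'. \<forall>\<beta>\<in>R'. refl \<alpha> \<beta> \<in> R')"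

definition lcount :: "'a list \<Rightarrow> nat \<Rightarrow> nat" where
  "lcount \<Gamma> i = card {j. j < i \<and> \<Gamma> ! j = \<Gamma> ! i}"

definition r_at :: "'a::euclidean_space list \<Rightarrow> nat \<Rightarrow> 'a \<Rightarrow> 'a" where
  "r_at \<Gamma> i = refl (\<Gamma> ! i)"

definition rhat_at :: "'a::euclidean_space list \<Rightarrow> nat \<Rightarrow> 'a \<Rightarrow> 'a" where
  "rhat_at \<Gamma> i = aff_refl (\<Gamma> ! i) (- real (lcount \<Gamma> i))"

definition prodJ :: "(nat \<Rightarrow> 'b \<Rightarrow> 'b) \<Rightarrow> nat set \<Rightarrow> 'b \<Rightarrow> 'b" where
  "prodJ f J = foldl (\<lambda>acc j. acc \<circ> f j) id (sorted_list_of_set J)"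

definition admissible :: "'a::euclidean_space set \<Rightarrow> 'a set \<Rightarrow> 'a list \<Rightarrow> nat set \<Rightarrow> bool" where
  "admissible R S \<Gamma> J \<longleftrightarrow> J \<subseteq> {..<length \<Gamma>} \<and>
     (let js = sorted_list_of_set J in
      \<forall>k<length js. qb_edge R S (foldl (\<lambda>acc j. acc \<circ> r_at \<Gamma> j) id (take k js)) (\<Gamma> ! (js ! k))
                              (foldl (\<lambda>acc j. acc \<circ> r_at \<Gamma> j) id (take (Suc k) js)))"

definition galleryJ :: "'a::euclidean_space set \<Rightarrow> 'a set \<Rightarrow> 'a list \<Rightarrow> nat set \<Rightarrow> nat \<Rightarrow> 'a set" where
  "galleryJ R S \<Gamma> J n = prodJ (rhat_at \<Gamma>) (J \<inter> {..<n}) ` chain_alcoves R S \<Gamma> n"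

end

theory Submission
  imports Defs
begin

text \<open>
  A \<lambda>-chain comes from a minimal alcove path, so the path never crosses a wall twice. Hence for a
  positive root \<gamma> the alcove reached after n steps lies in the strip -c < pairing \<nu> \<gamma> < 1 - c,
  where c counts the occurrences of \<gamma> among the first n roots.
  Every positive coroot of the rank two subsystem is a nonnegative integral combination of two of
  them, so the strips just before and just after the block force the hyperplanes H(\<gamma>, -l) of the
  block to pass through a common vertex z. The folding along the block fixes z and acts around z
  as its linear part v, which permutes the subsystem. Writing \<beta> = v \<delta>, the folded alcove at t lies
  in the unit strip just above the image of H(\<beta>, -l), and the folded alcove at t + q lies just
  above or just below it according as -\<delta> or \<delta> is positive.
\<close>

section \<open>Reflections\<close>

lemma inner_coroot_self: "\<alpha> \<noteq> 0 \<Longrightarrow> \<alpha> \<bullet> coroot \<alpha> = 2"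
  by (simp add: coroot_def inner_commute)

lemma pairing_self: "\<alpha> \<noteq> 0 \<Longrightarrow> pairing \<alpha> \<alpha> = 2"
  by (simp add: pairing_def inner_coroot_self)

lemma coroot_minus [simp]: "coroot (- \<alpha>) = - coroot \<alpha>"
  by (simp add: coroot_def)

lemma pairing_minus_right [simp]: "pairing \<nu> (- \<alpha>) = - pairing \<nu> \<alpha>"
  by (simp add: pairing_def)

lemma pairing_minus_left [simp]: "pairing (- x) \<alpha> = - pairing x \<alpha>"
  by (simp add: pairing_def)

lemma pairing_zero_left [simp]: "pairing 0 \<alpha> = 0"
  by (simp add: pairing_def)

lemma pairing_add_left: "pairing (x + y) \<alpha> = pairing x \<alpha> + pairing y \<alpha>"
  by (simp add: pairing_def inner_add_left)

lemma pairing_diff_left: "pairing (x - y) \<alpha> = pairing x \<alpha> - pairing y \<alpha>"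
  by (simp add: pairing_def inner_diff_left)

lemma pairing_scaleR_left: "pairing (c *\<^sub>R x) \<alpha> = c * pairing x \<alpha>"
  by (simp add: pairing_def)

lemma minus_neq_self: "(\<alpha>::'a::real_vector) \<noteq> 0 \<Longrightarrow> \<alpha> \<noteq> - \<alpha>"
  by (metis add.right_inverse scaleR_2 scaleR_eq_0_iff zero_neq_numeral)

lemma pairing_pos_commute:
  assumes "\<alpha> \<noteq> 0" "\<beta> \<noteq> 0"
  shows "pairing \<alpha> \<beta> > 0 \<longleftrightarrow> pairing \<beta> \<alpha> > 0"
proof -
  have "\<not> \<alpha> \<bullet> \<alpha> < 0" "\<not> \<beta> \<bullet> \<beta> < 0" using assms by (simp_all add: not_less)
  then show ?thesis using assms by (simp add: pairing_def coroot_def inner_commute zero_less_divide_iff)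
qed

lemma aff_refl_minus: "aff_refl (- \<beta>) k = aff_refl \<beta> (- k)"
  by (rule ext) (simp add: aff_refl_def algebra_simps)

lemma aff_refl_conv_refl: "aff_refl \<beta> k x = refl \<beta> x + k *\<^sub>R \<beta>"
  by (simp add: aff_refl_def refl_def algebra_simps)

lemma pairing_aff_refl_same: "\<beta> \<noteq> 0 \<Longrightarrow> pairing (aff_refl \<beta> k x) \<beta> = 2 * k - pairing x \<beta>"
  by (simp add: aff_refl_def pairing_def inner_diff_left inner_coroot_self algebra_simps)

lemma aff_refl_aff_refl: "\<beta> \<noteq> 0 \<Longrightarrow> aff_refl \<beta> k (aff_refl \<beta> k x) = x"
  by (simp add: aff_refl_def[of \<beta> k "aff_refl \<beta> k x"] pairing_aff_refl_same)
     (simp add: aff_refl_def algebra_simps)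

lemma aff_refl_fixed: "pairing x \<beta> = k \<Longrightarrow> aff_refl \<beta> k x = x"
  by (simp add: aff_refl_def)

lemma refl_self: "\<alpha> \<noteq> 0 \<Longrightarrow> refl \<alpha> \<alpha> = - \<alpha>"
  by (simp add: refl_def pairing_self algebra_simps scaleR_2)

lemma refl_conv_coroot: "refl \<alpha> v = v - (v \<bullet> \<alpha>) *\<^sub>R coroot \<alpha>"
  by (simp add: refl_def pairing_def coroot_def)

lemma linear_refl: "linear (refl \<alpha>)"
  unfolding linear_iff refl_def pairing_def by (simp add: inner_add_left algebra_simps)

lemma orthogonal_transformation_refl: "\<alpha> \<noteq> 0 \<Longrightarrow> orthogonal_transformation (refl \<alpha>)"
  unfolding orthogonal_transformation_def
  by (auto simp: linear_refl refl_def pairing_def coroot_def inner_diff_left inner_diff_right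
      inner_commute algebra_simps dot_square_norm power2_eq_square)

lemma coroot_orthogonal_transformation:
  "orthogonal_transformation L \<Longrightarrow> coroot (L \<alpha>) = L (coroot \<alpha>)"
  by (simp add: orthogonal_transformation_def coroot_def linear_cmul)

lemma pairing_orthogonal_transformation:
  "orthogonal_transformation L \<Longrightarrow> pairing (L x) (L \<alpha>) = pairing x \<alpha>"
  by (simp add: pairing_def coroot_orthogonal_transformation)
     (simp add: orthogonal_transformation_def)

lemma hyp_eq_imp_level_eq:
  assumes "\<delta> \<noteq> 0" "hyp \<delta> c1 = hyp \<delta> c2" shows "c1 = c2"
proof -
  have "(c1 / 2) *\<^sub>R \<delta> \<in> hyp \<delta> c1" using assms(1) by (simp add: hyp_def pairing_scaleR_left pairing_self)
  then have "(c1 / 2) *\<^sub>R \<delta> \<in> hyp \<delta> c2" using assms(2) by simp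
  then show ?thesis using assms(1) by (simp add: hyp_def pairing_scaleR_left pairing_self)
qed

section \<open>Affine isometries\<close>

context
  fixes F L :: "'a::euclidean_space \<Rightarrow> 'a" and b :: 'a
  assumes orth: "orthogonal_transformation L" and affine: "\<And>x. F x = L x + b"
begin

lemma pairing_affine_isometry: "pairing (F x) (L \<delta>) = pairing x \<delta> + pairing b (L \<delta>)"
  using orth by (simp add: affine pairing_add_left pairing_orthogonal_transformation)

lemma affine_isometry_aff_refl: "F (aff_refl \<beta> k x) = aff_refl (L \<beta>) (k + pairing b (L \<beta>)) (F x)"
proof -
  have lin: "linear L" using orth by (rule orthogonal_transformation_linear)
  have "F (aff_refl \<beta> k x) = L x + b - (pairing x \<beta> - k) *\<^sub>R L \<beta>"
    by (simp add: affine aff_refl_def linear_diff[OF lin] linear_scale[OF lin])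
  then show ?thesis
    using pairing_affine_isometry[of x \<beta>] by (simp add: affine aff_refl_def algebra_simps)
qed

lemma affine_isometry_image_hyp: "F ` hyp \<delta> c = hyp (L \<delta>) (c + pairing b (L \<delta>))"
proof
  show "F ` hyp \<delta> c \<subseteq> hyp (L \<delta>) (c + pairing b (L \<delta>))"
    using pairing_affine_isometry by (auto simp: hyp_def)
next
  show "hyp (L \<delta>) (c + pairing b (L \<delta>)) \<subseteq> F ` hyp \<delta> c"
  proof
    fix y assume y: "y \<in> hyp (L \<delta>) (c + pairing b (L \<delta>))"
    obtain x where x: "L x = y - b" using orthogonal_transformation_surj[OF orth] by (metis surjD)
    then have "F x = y" by (simp add: affine)
    moreover have "pairing x \<delta> = c"
      using pairing_affine_isometry[of x \<delta>] y \<open>F x = y\<close> by (simp add: hyp_def)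
    ultimately show "y \<in> F ` hyp \<delta> c" by (auto simp: hyp_def)
  qed
qed

lemma inj_affine_isometry: "inj F"
  using orthogonal_transformation_inj[OF orth] by (auto simp: inj_def affine)

lemma affine_isometry_image_conv: "F ` X = (+) b ` (L ` X)"
  by (auto simp: image_iff affine add.commute)

lemma closure_affine_isometry_image: "closure (F ` X) = F ` closure X"
proof -
  have "linear L" "inj L"
    using orth by (auto simp: orthogonal_transformation_linear orthogonal_transformation_inj)
  note closure_injective_linear_image[OF this, symmetric]
  then show ?thesis unfolding affine_isometry_image_conv closure_translation by simp
qed

lemma aff_dim_affine_isometry_image: "aff_dim (F ` X) = aff_dim X"
proof -
  have "linear L" "inj L"
    using orth by (auto simp: orthogonal_transformation_linear orthogonal_transformation_inj)
  then show ?thesis unfolding affine_isometry_image_conv aff_dim_translation_eq by simp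
qed

end

section \<open>Ordered products of reflections\<close>

lemma rhat_at_conv_r_at: "rhat_at \<Gamma> j x = r_at \<Gamma> j x + (- real (lcount \<Gamma> j)) *\<^sub>R (\<Gamma> ! j)"
  by (simp add: rhat_at_def r_at_def aff_refl_conv_refl)

lemma foldl_rhat_at_affine:
  assumes "\<forall>j\<in>set js. \<Gamma> ! j \<noteq> 0"
  shows "orthogonal_transformation (foldl (\<lambda>acc j. acc \<circ> r_at \<Gamma> j) id js) \<and>
    (\<forall>x. foldl (\<lambda>acc j. acc \<circ> rhat_at \<Gamma> j) id js x =
         foldl (\<lambda>acc j. acc \<circ> r_at \<Gamma> j) id js x + foldl (\<lambda>acc j. acc \<circ> rhat_at \<Gamma> j) id js 0)"
  using assms
proof (induction js rule: rev_induct)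
  case Nil
  then show ?case by (simp add: orthogonal_transformation_def linear_iff)
next
  case (snoc y js)
  let ?L = "foldl (\<lambda>acc j. acc \<circ> r_at \<Gamma> j) id js"
  let ?F = "foldl (\<lambda>acc j. acc \<circ> rhat_at \<Gamma> j) id js"
  have "\<forall>j\<in>set js. \<Gamma> ! j \<noteq> 0" using snoc.prems by simp
  then have "orthogonal_transformation ?L \<and> (\<forall>x. ?F x = ?L x + ?F 0)" by (rule snoc.IH)
  then have IH: "orthogonal_transformation ?L" "\<And>x. ?F x = ?L x + ?F 0" by blast+
  have lin: "linear ?L" using IH(1) by (rule orthogonal_transformation_linear)
  have "\<Gamma> ! y \<noteq> 0" using snoc.prems by simp
  then have orth: "orthogonal_transformation (?L \<circ> r_at \<Gamma> y)"
    using IH(1) by (simp add: orthogonal_transformation_compose orthogonal_transformation_refl r_at_def)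
  have r0: "r_at \<Gamma> y 0 = 0" by (simp add: r_at_def refl_def)
  let ?c = "(- real (lcount \<Gamma> y)) *\<^sub>R (\<Gamma> ! y)"
  have step: "?F (rhat_at \<Gamma> y x) = ?L (r_at \<Gamma> y x) + ?F (rhat_at \<Gamma> y 0)" for x
  proof -
    have "?F (rhat_at \<Gamma> y x) = ?L (r_at \<Gamma> y x) + ?L ?c + ?F 0"
      using IH(2)[of "rhat_at \<Gamma> y x"] linear_add[OF lin, of "r_at \<Gamma> y x" ?c]
      unfolding rhat_at_conv_r_at by simp
    moreover have "?F (rhat_at \<Gamma> y 0) = ?L ?c + ?F 0"
      using IH(2)[of "rhat_at \<Gamma> y 0"] r0 by (simp add: rhat_at_conv_r_at)
    ultimately show ?thesis by (simp add: algebra_simps)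
  qed
  show ?case
  proof (simp only: foldl_append foldl_Cons foldl_Nil, intro conjI allI orth)
    fix x
    show "(?F \<circ> rhat_at \<Gamma> y) x = (?L \<circ> r_at \<Gamma> y) x + (?F \<circ> rhat_at \<Gamma> y) 0"
      using step[of x] by (simp only: comp_apply[of ?F] comp_apply[of ?L])
  qed
qed

lemma prodJ_rhat_at_affine:
  assumes "\<forall>j\<in>J. \<Gamma> ! j \<noteq> 0" "finite J"
  shows "orthogonal_transformation (prodJ (r_at \<Gamma>) J)"
    and "prodJ (rhat_at \<Gamma>) J x = prodJ (r_at \<Gamma>) J x + prodJ (rhat_at \<Gamma>) J 0"
proof -
  have "\<forall>j\<in>set (sorted_list_of_set J). \<Gamma> ! j \<noteq> 0" using assms by simp
  from foldl_rhat_at_affine[OF this] show "orthogonal_transformation (prodJ (r_at \<Gamma>) J)"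
    and "prodJ (rhat_at \<Gamma>) J x = prodJ (r_at \<Gamma>) J x + prodJ (rhat_at \<Gamma>) J 0"
    unfolding prodJ_def by blast+
qed

lemma sorted_list_of_set_Un_less:
  fixes A B :: "nat set"
  assumes "finite A" "finite B" "\<forall>a\<in>A. \<forall>b\<in>B. a < b"
  shows "sorted_list_of_set (A \<union> B) = sorted_list_of_set A @ sorted_list_of_set B"
proof -
  have "A \<inter> B = {}" using assms by auto
  then have "sorted_wrt (<) (sorted_list_of_set A @ sorted_list_of_set B) \<and>
        set (sorted_list_of_set A @ sorted_list_of_set B) = A \<union> B \<and>
        length (sorted_list_of_set A @ sorted_list_of_set B) = card (A \<union> B)"
    using assms by (simp add: sorted_wrt_append card_Un_disjoint)
  then show ?thesis using sorted_list_of_set_unique[of "A \<union> B"] assms by blast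
qed

lemma foldl_comp_left:
  fixes g :: "'a \<Rightarrow> 'a" and f :: "'c \<Rightarrow> 'a \<Rightarrow> 'a"
  shows "foldl (\<lambda>acc j. acc \<circ> f j) g ys = g \<circ> foldl (\<lambda>acc j. acc \<circ> f j) id ys"
proof (induction ys arbitrary: g)
  case Nil
  then show ?case by simp
next
  case (Cons y ys)
  let ?F = "\<lambda>acc j. acc \<circ> f j"
  have "foldl ?F g (y # ys) = foldl ?F (g \<circ> f y) ys" by (simp only: foldl_Cons)
  also have "\<dots> = (g \<circ> f y) \<circ> foldl ?F id ys" by (rule Cons.IH)
  also have "\<dots> = g \<circ> ((id \<circ> f y) \<circ> foldl ?F id ys)" by (simp only: comp_assoc id_comp)
  also have "\<dots> = g \<circ> foldl ?F (id \<circ> f y) ys" by (simp only: Cons.IH[of "id \<circ> f y", symmetric])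
  also have "\<dots> = g \<circ> foldl ?F id (y # ys)" by (simp only: foldl_Cons)
  finally show ?case .
qed

lemma prodJ_split:
  fixes J :: "nat set"
  assumes "finite J" "t \<le> n"
  shows "prodJ f (J \<inter> {..<n}) = prodJ f (J \<inter> {..<t}) \<circ> prodJ f (J \<inter> {t..<n})"
proof -
  have "J \<inter> {..<n} = (J \<inter> {..<t}) \<union> (J \<inter> {t..<n})" using assms by auto
  then have "sorted_list_of_set (J \<inter> {..<n}) =
      sorted_list_of_set (J \<inter> {..<t}) @ sorted_list_of_set (J \<inter> {t..<n})"
    using assms by (simp add: sorted_list_of_set_Un_less)
  then show ?thesis unfolding prodJ_def by (simp only: foldl_append) (rule foldl_comp_left)
qed

lemma prodJ_fixed_point: "finite J \<Longrightarrow> (\<forall>j\<in>J. g j x = x) \<Longrightarrow> prodJ g J x = x"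
proof -
  have "(\<forall>j\<in>set js. g j x = x) \<Longrightarrow> foldl (\<lambda>acc j. acc \<circ> g j) id js x = x" for js
    by (induction js rule: rev_induct) auto
  then show "finite J \<Longrightarrow> (\<forall>j\<in>J. g j x = x) \<Longrightarrow> prodJ g J x = x" by (simp add: prodJ_def)
qed

lemma prodJ_preserves:
  "finite J \<Longrightarrow> (\<forall>j\<in>J. \<forall>x\<in>X. g j x \<in> X) \<Longrightarrow> x \<in> X \<Longrightarrow> prodJ g J x \<in> X"
proof -
  have "(\<forall>j\<in>set js. \<forall>x\<in>X. g j x \<in> X) \<Longrightarrow> x \<in> X \<Longrightarrow> foldl (\<lambda>acc j. acc \<circ> g j) id js x \<in> X" for js x
    by (induction js arbitrary: x rule: rev_induct) auto
  then show "finite J \<Longrightarrow> (\<forall>j\<in>J. \<forall>x\<in>X. g j x \<in> X) \<Longrightarrow> x \<in> X \<Longrightarrow> prodJ g J x \<in> X"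
    by (simp add: prodJ_def)
qed

section \<open>Alcoves\<close>

lemma components_image_involution:
  fixes f :: "'b::topological_space \<Rightarrow> 'b"
  assumes cont: "continuous_on UNIV f" and inv: "\<And>x. f (f x) = x" and S: "\<And>x. x \<in> S \<Longrightarrow> f x \<in> S"
    and C: "C \<in> components S"
  shows "f ` C \<in> components S"
proof -
  have sub: "f ` connected_component_set S y \<subseteq> connected_component_set S (f y)" if "y \<in> S" for y
  proof (rule connected_component_maximal)
    show "f y \<in> f ` connected_component_set S y" using that by simp
    show "connected (f ` connected_component_set S y)"
      by (rule connected_continuous_image) (auto intro: continuous_on_subset[OF cont])
    show "f ` connected_component_set S y \<subseteq> S" using connected_component_subset S by blast
  qed
  obtain x where x: "x \<in> S" "C = connected_component_set S x" using C by (auto simp: components_iff)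
  have "f ` C = connected_component_set S (f x)"
  proof
    show "f ` C \<subseteq> connected_component_set S (f x)" using sub x by simp
    have "f ` connected_component_set S (f x) \<subseteq> connected_component_set S (f (f x))" using sub S x by blast
    then have "f ` connected_component_set S (f x) \<subseteq> C" using inv x by simp
    then have "f ` f ` connected_component_set S (f x) \<subseteq> f ` C" by blast
    then show "connected_component_set S (f x) \<subseteq> f ` C" using inv by (simp add: image_image)
  qed
  then show ?thesis using S x by (auto simp: components_iff)
qed

lemma continuous_on_aff_refl: "continuous_on UNIV (aff_refl \<gamma> k)"
  unfolding aff_refl_def pairing_def by (intro continuous_intros)

definition alcove_level :: "'a::euclidean_space set \<Rightarrow> 'a \<Rightarrow> int" where
  "alcove_level A \<delta> = floor (pairing (SOME x. x \<in> A) \<delta>)"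

context
  fixes R :: "'a::euclidean_space set"
  assumes RS: "root_system R"
begin

lemma root_nonzero: "\<alpha> \<in> R \<Longrightarrow> \<alpha> \<noteq> 0"
  using RS unfolding root_system_def by blast

lemma refl_root: "\<alpha> \<in> R \<Longrightarrow> \<beta> \<in> R \<Longrightarrow> refl \<alpha> \<beta> \<in> R"
  using RS unfolding root_system_def by blast

lemma minus_root: "\<alpha> \<in> R \<Longrightarrow> - \<alpha> \<in> R"
  using refl_root[of \<alpha> \<alpha>] refl_self[OF root_nonzero] by simp

lemma pairing_root_int: "\<alpha> \<in> R \<Longrightarrow> \<beta> \<in> R \<Longrightarrow> pairing \<beta> \<alpha> \<in> \<int>"
  using RS unfolding root_system_def by blast

lemma root_scaleR_cases: "\<alpha> \<in> R \<Longrightarrow> c *\<^sub>R \<alpha> \<in> R \<Longrightarrow> c = 1 \<or> c = -1"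
  using RS unfolding root_system_def by blast

lemma finite_roots: "finite R"
  using RS unfolding root_system_def by blast

lemma coroot_parallel_root_cases:
  assumes "\<alpha> \<in> R" "\<beta> \<in> R" "coroot \<beta> = t *\<^sub>R coroot \<alpha>"
  shows "\<beta> = \<alpha> \<or> \<beta> = - \<alpha>"
proof -
  have a: "\<alpha> \<noteq> 0" "\<beta> \<noteq> 0" using assms root_nonzero by auto
  then have "\<alpha> \<bullet> \<alpha> \<noteq> 0" "\<beta> \<bullet> \<beta> \<noteq> 0" by auto
  have "\<beta> = ((\<beta> \<bullet> \<beta>) / 2) *\<^sub>R coroot \<beta>" using a by (simp add: coroot_def)
  also have "\<dots> = ((\<beta> \<bullet> \<beta>) / 2 * t * (2 / (\<alpha> \<bullet> \<alpha>))) *\<^sub>R \<alpha>"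
    using assms(3) by (simp add: coroot_def)
  finally have e: "\<beta> = ((\<beta> \<bullet> \<beta>) / 2 * t * (2 / (\<alpha> \<bullet> \<alpha>))) *\<^sub>R \<alpha>" .
  define c where "c = (\<beta> \<bullet> \<beta>) / 2 * t * (2 / (\<alpha> \<bullet> \<alpha>))"
  have e2: "\<beta> = c *\<^sub>R \<alpha>" using e c_def by simp
  then have "c = 1 \<or> c = -1"
    using root_scaleR_cases[OF assms(1)] assms(2) by metis
  then show ?thesis using e2 by (metis scaleR_one scaleR_minus1_left)
qed

lemma hyp_not_subset_hyp:
  assumes "\<beta> \<in> R" "\<delta> \<in> R" "\<delta> \<noteq> \<beta>" "\<delta> \<noteq> - \<beta>"
  shows "\<not> hyp \<beta> k \<subseteq> hyp \<delta> m"
proof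
  assume sub: "hyp \<beta> k \<subseteq> hyp \<delta> m"
  define a where "a = coroot \<beta>"
  define b where "b = coroot \<delta>"
  have an: "a \<noteq> 0" using root_nonzero[OF assms(1)] by (simp add: a_def coroot_def)
  then have aa: "a \<bullet> a \<noteq> 0" by simp
  define x0 where "x0 = (k / (a \<bullet> a)) *\<^sub>R a"
  have hx: "x \<in> hyp \<beta> k \<longleftrightarrow> x \<bullet> a = k" for x by (simp add: hyp_def pairing_def a_def)
  have hy: "x \<in> hyp \<delta> m \<longleftrightarrow> x \<bullet> b = m" for x by (simp add: hyp_def pairing_def b_def)
  have x0: "x0 \<bullet> a = k" using aa by (simp add: x0_def)
  define v where "v = b - ((b \<bullet> a) / (a \<bullet> a)) *\<^sub>R a"
  have "v \<bullet> a = b \<bullet> a - (b \<bullet> a) / (a \<bullet> a) * (a \<bullet> a)" by (simp add: v_def inner_diff_left)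
  then have va: "v \<bullet> a = 0" using aa by simp
  have "(x0 + v) \<bullet> a = k" using x0 va by (simp add: inner_add_left)
  then have "(x0 + v) \<bullet> b = m" "x0 \<bullet> b = m" using sub x0 hx hy by blast+
  then have vb: "v \<bullet> b = 0" by (simp add: inner_add_left)
  have "v \<bullet> v = v \<bullet> b - ((b \<bullet> a) / (a \<bullet> a)) * (v \<bullet> a)" by (simp add: v_def inner_diff_right)
  then have "v = 0" using va vb by simp
  then have "coroot \<delta> = ((b \<bullet> a) / (a \<bullet> a)) *\<^sub>R coroot \<beta>" by (simp add: v_def a_def b_def)
  then have "\<delta> = \<beta> \<or> \<delta> = - \<beta>" by (rule coroot_parallel_root_cases[OF assms(1,2)])
  then show False using assms by blast
qed

lemma aff_dim_hyp: "\<beta> \<in> R \<Longrightarrow> aff_dim (hyp \<beta> k) = int DIM('a) - 1"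
proof -
  assume b: "\<beta> \<in> R"
  have "coroot \<beta> \<noteq> 0" using root_nonzero[OF b] by (simp add: coroot_def)
  moreover have "hyp \<beta> k = {x. coroot \<beta> \<bullet> x = k}" by (auto simp: hyp_def pairing_def inner_commute)
  ultimately show ?thesis by simp
qed

lemma aff_dim_hyp_Int_hyp:
  assumes "\<beta> \<in> R" "\<delta> \<in> R" "\<delta> \<noteq> \<beta>" "\<delta> \<noteq> - \<beta>"
  shows "aff_dim (hyp \<beta> k \<inter> hyp \<delta> m) \<le> int DIM('a) - 2"
proof -
  have e: "hyp \<delta> m = {x. coroot \<delta> \<bullet> x = m}" by (auto simp: hyp_def pairing_def inner_commute)
  have af: "affine (hyp \<beta> k)" by (simp add: hyp_def pairing_def affine_hyperplane[of "coroot \<beta>" k, unfolded inner_commute[of "coroot \<beta>"]])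
  have ns: "\<not> hyp \<beta> k \<subseteq> {v. coroot \<delta> \<bullet> v = m}" using hyp_not_subset_hyp[OF assms, of k m] unfolding e .
  have d: "DIM('a) \<ge> 1" using DIM_positive by (simp add: Suc_le_eq)
  show ?thesis
    using aff_dim_affine_Int_hyperplane[OF af, of "coroot \<delta>" m] ns aff_dim_hyp[OF assms(1), of k] d
    unfolding e by (auto split: if_splits)
qed

lemma aff_refl_walls:
  assumes g: "\<gamma> \<in> R" and x: "x \<in> walls R"
  shows "aff_refl \<gamma> (of_int c) x \<in> walls R"
proof -
  obtain \<delta> k where d: "\<delta> \<in> R" and k: "x \<in> hyp \<delta> (of_int k)" using x by (auto simp: walls_def)
  have o: "orthogonal_transformation (refl \<gamma>)" by (rule orthogonal_transformation_refl[OF root_nonzero[OF g]])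
  have F: "\<And>y. aff_refl \<gamma> (of_int c) y = refl \<gamma> y + (of_int c *\<^sub>R \<gamma>)" by (simp add: aff_refl_conv_refl)
  have rd: "refl \<gamma> \<delta> \<in> R" by (rule refl_root[OF g d])
  obtain n where n: "pairing \<gamma> (refl \<gamma> \<delta>) = of_int n" using pairing_root_int[OF rd g] by (auto elim: Ints_cases)
  have "pairing (aff_refl \<gamma> (of_int c) x) (refl \<gamma> \<delta>) = pairing x \<delta> + pairing (of_int c *\<^sub>R \<gamma>) (refl \<gamma> \<delta>)"
    by (rule pairing_affine_isometry[OF o F])
  also have "\<dots> = of_int (k + c * n)" using k n by (simp add: hyp_def pairing_scaleR_left)
  finally have "aff_refl \<gamma> (of_int c) x \<in> hyp (refl \<gamma> \<delta>) (of_int (k + c * n))" by (simp add: hyp_def)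
  then show ?thesis using rd unfolding walls_def by blast
qed

lemma is_alcove_aff_refl_image:
  assumes g: "\<gamma> \<in> R" and A: "is_alcove R A"
  shows "is_alcove R (aff_refl \<gamma> (of_int c) ` A)"
  unfolding is_alcove_def
proof (rule components_image_involution[OF continuous_on_aff_refl])
  show "\<And>x. aff_refl \<gamma> (of_int c) (aff_refl \<gamma> (of_int c) x) = x" by (rule aff_refl_aff_refl[OF root_nonzero[OF g]])
  show "\<And>x. x \<in> UNIV - walls R \<Longrightarrow> aff_refl \<gamma> (of_int c) x \<in> UNIV - walls R"
    using aff_refl_walls[OF g] aff_refl_aff_refl[OF root_nonzero[OF g]] by (metis Diff_iff UNIV_I)
  show "A \<in> components (UNIV - walls R)" using A by (simp add: is_alcove_def)
qed

lemma alcove_nonempty: "is_alcove R A \<Longrightarrow> A \<noteq> {}"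
  by (simp add: is_alcove_def in_components_nonempty)

lemma alcove_not_on_wall: "is_alcove R A \<Longrightarrow> x \<in> A \<Longrightarrow> \<delta> \<in> R \<Longrightarrow> pairing x \<delta> \<noteq> of_int k"
  using in_components_subset unfolding is_alcove_def walls_def hyp_def by fastforce

lemma alcove_floor_eq_le:
  assumes A: "is_alcove R A" and x: "x \<in> A" and y: "y \<in> A" and d: "\<delta> \<in> R" and le: "pairing x \<delta> \<le> pairing y \<delta>"
  shows "floor (pairing x \<delta>) = floor (pairing y \<delta>)"
proof (rule ccontr)
  assume ne: "floor (pairing x \<delta>) \<noteq> floor (pairing y \<delta>)"
  define m where "m = floor (pairing y \<delta>)"
  have "floor (pairing x \<delta>) \<le> m" using le by (simp add: m_def floor_mono)
  then have lt: "floor (pairing x \<delta>) < m" using ne m_def by simp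
  have "pairing x \<delta> < of_int m" using lt by linarith
  moreover have "of_int m \<le> pairing y \<delta>" by (simp add: m_def)
  moreover have "connected A" using A by (simp add: is_alcove_def in_components_connected)
  ultimately obtain z where "z \<in> A" "inner (coroot \<delta>) z = of_int m"
    using connected_ivt_hyperplane[of A x y "coroot \<delta>" "of_int m"] x y
    by (auto simp: pairing_def inner_commute)
  then show False using alcove_not_on_wall[OF A _ d, of z m] by (simp add: pairing_def inner_commute)
qed

lemma alcove_floor_eq:
  assumes A: "is_alcove R A" and x: "x \<in> A" and y: "y \<in> A" and d: "\<delta> \<in> R"
  shows "floor (pairing x \<delta>) = floor (pairing y \<delta>)"
  using alcove_floor_eq_le[OF A x y d] alcove_floor_eq_le[OF A y x d] by linarith

lemma alcove_level_floor:
  assumes A: "is_alcove R A" and x: "x \<in> A" and d: "\<delta> \<in> R"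
  shows "alcove_level A \<delta> = floor (pairing x \<delta>)"
proof -
  have "(SOME x. x \<in> A) \<in> A" using x by (rule someI)
  then show ?thesis unfolding alcove_level_def using alcove_floor_eq[OF A _ x d] by blast
qed

lemma alcove_level_bounds:
  assumes A: "is_alcove R A" and x: "x \<in> A" and d: "\<delta> \<in> R"
  shows "of_int (alcove_level A \<delta>) < pairing x \<delta> \<and> pairing x \<delta> < of_int (alcove_level A \<delta>) + 1"
proof -
  have "pairing x \<delta> \<noteq> of_int (floor (pairing x \<delta>))" by (rule alcove_not_on_wall[OF A x d])
  then show ?thesis using alcove_level_floor[OF A x d] by linarith
qed

lemma alcove_level_unique:
  assumes A: "is_alcove R A" and x: "x \<in> A" and d: "\<delta> \<in> R"
    and "of_int j < pairing x \<delta>" "pairing x \<delta> < of_int j + 1"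
  shows "alcove_level A \<delta> = j"
  using alcove_level_floor[OF A x d] assms(4,5) by linarith

lemma alcove_level_minus:
  assumes A: "is_alcove R A" and d: "\<delta> \<in> R"
  shows "alcove_level A (- \<delta>) = - alcove_level A \<delta> - 1"
proof -
  obtain x where x: "x \<in> A" using alcove_nonempty[OF A] by blast
  have "of_int (alcove_level A \<delta>) < pairing x \<delta> \<and> pairing x \<delta> < of_int (alcove_level A \<delta>) + 1" by (rule alcove_level_bounds[OF A x d])
  then show ?thesis by (intro alcove_level_unique[OF A x minus_root[OF d]]) auto
qed

lemma closure_alcove_strip:
  assumes A: "is_alcove R A" and d: "\<delta> \<in> R"
  shows "closure A \<subseteq> {x. of_int (alcove_level A \<delta>) \<le> pairing x \<delta> \<and> pairing x \<delta> \<le> of_int (alcove_level A \<delta>) + 1}"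
proof (rule closure_minimal)
  show "A \<subseteq> {x. of_int (alcove_level A \<delta>) \<le> pairing x \<delta> \<and> pairing x \<delta> \<le> of_int (alcove_level A \<delta>) + 1}"
    using alcove_level_bounds[OF A _ d] by fastforce
  have "{x. of_int (alcove_level A \<delta>) \<le> pairing x \<delta> \<and> pairing x \<delta> \<le> of_int (alcove_level A \<delta>) + 1} =
        {x. of_int (alcove_level A \<delta>) \<le> inner x (coroot \<delta>)} \<inter> {x. inner x (coroot \<delta>) \<le> of_int (alcove_level A \<delta>) + 1}"
    by (auto simp: pairing_def)
  then show "closed {x. of_int (alcove_level A \<delta>) \<le> pairing x \<delta> \<and> pairing x \<delta> \<le> of_int (alcove_level A \<delta>) + 1}"
    by (simp add: closed_Int closed_halfspace_component_le closed_Collect_le continuous_on_inner continuous_on_const continuous_on_id)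
qed

lemma closure_alcoves_Int_subset_hyp:
  assumes A: "is_alcove R A" and B: "is_alcove R B" and d: "\<delta> \<in> R"
    and ne: "alcove_level A \<delta> \<noteq> alcove_level B \<delta>"
  shows "closure A \<inter> closure B \<subseteq> hyp \<delta> (of_int (max (alcove_level A \<delta>) (alcove_level B \<delta>)))"
proof
  fix y assume y: "y \<in> closure A \<inter> closure B"
  have "of_int (alcove_level A \<delta>) \<le> pairing y \<delta>" "pairing y \<delta> \<le> of_int (alcove_level A \<delta>) + 1"
    "of_int (alcove_level B \<delta>) \<le> pairing y \<delta>" "pairing y \<delta> \<le> of_int (alcove_level B \<delta>) + 1"
    using closure_alcove_strip[OF A d] closure_alcove_strip[OF B d] y by auto
  moreover have "alcove_level A \<delta> + 1 \<le> alcove_level B \<delta> \<or> alcove_level B \<delta> + 1 \<le> alcove_level A \<delta>"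
    using ne by linarith
  ultimately show "y \<in> hyp \<delta> (of_int (max (alcove_level A \<delta>) (alcove_level B \<delta>)))"
    by (auto simp: hyp_def max_def)
qed

lemma alcove_edge_levels:
  assumes E: "alcove_edge R A \<beta> B"
  shows "\<exists>k::int. B = aff_refl \<beta> (of_int k) ` A \<and> alcove_level A \<beta> = k - 1 \<and> alcove_level B \<beta> = k \<and>
           (\<forall>\<delta>\<in>R. \<delta> \<noteq> \<beta> \<and> \<delta> \<noteq> - \<beta> \<longrightarrow> alcove_level B \<delta> = alcove_level A \<delta>)"
proof -
  obtain k :: int where Bk: "B = aff_refl \<beta> (of_int k) ` A"
    and facet: "aff_dim (closure A \<inter> hyp \<beta> (of_int k)) = int DIM('a) - 1"
    and below: "\<forall>\<nu>\<in>A. pairing \<nu> \<beta> < of_int k"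
    and A: "is_alcove R A" and B: "is_alcove R B" and b: "\<beta> \<in> R"
    using E unfolding alcove_edge_def by blast
  have bnz: "\<beta> \<noteq> 0" by (rule root_nonzero[OF b])
  let ?F = "closure A \<inter> hyp \<beta> (of_int k)"
  have "?F \<noteq> {}"
  proof
    assume "?F = {}"
    then show False using facet DIM_positive[where 'a='a] by simp
  qed
  then obtain z where z: "z \<in> closure A" "pairing z \<beta> = of_int k" by (auto simp: hyp_def)
  obtain x where x: "x \<in> A" using alcove_nonempty[OF A] by blast
  have "of_int (alcove_level A \<beta>) < (of_int k :: real)"
    using alcove_level_bounds[OF A x b] below x by fastforce
  moreover have "of_int k \<le> of_int (alcove_level A \<beta>) + (1::real)"
    using closure_alcove_strip[OF A b] z by force
  ultimately have level_A: "alcove_level A \<beta> = k - 1" by linarith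
  have "pairing (aff_refl \<beta> (of_int k) x) \<beta> = 2 * of_int k - pairing x \<beta>"
    by (rule pairing_aff_refl_same[OF bnz])
  then have "alcove_level B \<beta> = k"
    using alcove_level_unique[OF B _ b] alcove_level_bounds[OF A x b] level_A below x Bk by force
  moreover have "alcove_level B \<delta> = alcove_level A \<delta>" if d: "\<delta> \<in> R" "\<delta> \<noteq> \<beta>" "\<delta> \<noteq> - \<beta>" for \<delta>
  proof (rule ccontr)
    assume ne: "alcove_level B \<delta> \<noteq> alcove_level A \<delta>"
    have closure_B: "closure B = aff_refl \<beta> (of_int k) ` closure A"
      using Bk closure_affine_isometry_image[OF orthogonal_transformation_refl[OF bnz] aff_refl_conv_refl] by simp
    have "?F \<subseteq> closure A \<inter> closure B"
    proof (intro subsetI IntI)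
      fix y assume y: "y \<in> ?F"
      then show "y \<in> closure A" by simp
      have "aff_refl \<beta> (of_int k) y = y" using y by (intro aff_refl_fixed) (simp add: hyp_def)
      then show "y \<in> closure B" using y closure_B by (metis IntD1 image_eqI)
    qed
    also have "\<dots> \<subseteq> hyp \<delta> (of_int (max (alcove_level A \<delta>) (alcove_level B \<delta>)))"
      using closure_alcoves_Int_subset_hyp[OF A B d(1)] ne by auto
    finally have "aff_dim ?F \<le> aff_dim (hyp \<beta> (of_int k) \<inter> hyp \<delta> (of_int (max (alcove_level A \<delta>) (alcove_level B \<delta>))))"
      by (intro aff_dim_subset) auto
    also have "\<dots> \<le> int DIM('a) - 2" by (rule aff_dim_hyp_Int_hyp[OF b d])
    finally show False using facet by simp
  qed
  ultimately show ?thesis using Bk level_A by blast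
qed

lemma alcove_edge_aff_refl_image:
  assumes E: "alcove_edge R A \<beta> B" and g: "\<gamma> \<in> R"
  shows "\<exists>\<beta>'. alcove_edge R (aff_refl \<gamma> (of_int c) ` A) \<beta>' (aff_refl \<gamma> (of_int c) ` B)"
proof -
  obtain k :: int where Bk: "B = aff_refl \<beta> (of_int k) ` A"
    and facet: "aff_dim (closure A \<inter> hyp \<beta> (of_int k)) = int DIM('a) - 1"
    and below: "\<forall>\<nu>\<in>A. pairing \<nu> \<beta> < of_int k"
    and A: "is_alcove R A" and B: "is_alcove R B" and b: "\<beta> \<in> R"
    using E unfolding alcove_edge_def by blast
  define \<sigma> where "\<sigma> = aff_refl \<gamma> (of_int c)"
  have orth: "orthogonal_transformation (refl \<gamma>)" by (rule orthogonal_transformation_refl[OF root_nonzero[OF g]])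
  have affine: "\<And>y. \<sigma> y = refl \<gamma> y + (of_int c *\<^sub>R \<gamma>)" by (simp add: \<sigma>_def aff_refl_conv_refl)
  define \<beta>' where "\<beta>' = refl \<gamma> \<beta>"
  have b': "\<beta>' \<in> R" using refl_root[OF g b] by (simp add: \<beta>'_def)
  obtain n where n: "pairing \<gamma> \<beta>' = of_int n" using pairing_root_int[OF b' g] by (auto elim: Ints_cases)
  have pb: "pairing (of_int c *\<^sub>R \<gamma>) \<beta>' = of_int (c * n)" using n by (simp add: pairing_scaleR_left)
  define k' where "k' = k + c * n"
  have "alcove_edge R (\<sigma> ` A) \<beta>' (\<sigma> ` B)"
    unfolding alcove_edge_def
  proof (intro conjI exI[of _ k'])
    show "is_alcove R (\<sigma> ` A)" "is_alcove R (\<sigma> ` B)" using is_alcove_aff_refl_image[OF g] A B \<sigma>_def by auto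
    show "\<beta>' \<in> R" by (rule b')
    have "\<sigma> ` B = (\<lambda>x. \<sigma> (aff_refl \<beta> (of_int k) x)) ` A" using Bk by (simp add: image_image)
    also have "\<dots> = (\<lambda>x. aff_refl \<beta>' (of_int k') (\<sigma> x)) ` A"
      using affine_isometry_aff_refl[OF orth affine, of \<beta> "of_int k"] pb by (simp add: \<beta>'_def k'_def)
    also have "\<dots> = aff_refl \<beta>' (of_int k') ` \<sigma> ` A" by (simp add: image_image)
    finally show "\<sigma> ` B = aff_refl \<beta>' (of_int k') ` \<sigma> ` A" .
    have h: "\<sigma> ` hyp \<beta> (of_int k) = hyp \<beta>' (of_int k')"
      using affine_isometry_image_hyp[OF orth affine, of \<beta> "of_int k"] pb by (simp add: \<beta>'_def k'_def)
    have "closure (\<sigma> ` A) \<inter> hyp \<beta>' (of_int k') = \<sigma> ` (closure A \<inter> hyp \<beta> (of_int k))"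
      using closure_affine_isometry_image[OF orth affine] h image_Int[OF inj_affine_isometry[OF orth affine]] by simp
    then show "aff_dim (closure (\<sigma> ` A) \<inter> hyp \<beta>' (of_int k')) = int DIM('a) - 1"
      using aff_dim_affine_isometry_image[OF orth affine] facet by simp
    show "\<forall>\<nu>\<in>\<sigma> ` A. pairing \<nu> \<beta>' < of_int k'"
    proof
      fix \<nu> assume "\<nu> \<in> \<sigma> ` A"
      then obtain x where x: "x \<in> A" "\<nu> = \<sigma> x" by blast
      have "pairing (\<sigma> x) \<beta>' = pairing x \<beta> + pairing (of_int c *\<^sub>R \<gamma>) \<beta>'"
        using pairing_affine_isometry[OF orth affine, of x \<beta>] by (simp add: \<beta>'_def)
      then show "pairing \<nu> \<beta>' < of_int k'" using below x pb by (simp add: k'_def)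
    qed
  qed
  then show ?thesis unfolding \<sigma>_def by blast
qed

text \<open>Reflecting the part of a path between two crossings of the same wall removes both crossings.\<close>

lemma alcove_path_shortcut:
  fixes f :: "nat \<Rightarrow> 'a set"
  assumes edges: "\<forall>m<L. \<exists>\<beta>. alcove_edge R (f m) \<beta> (f (Suc m))"
    and ij: "i < j" "j < L" and g: "\<gamma> \<in> R"
    and fi: "f (Suc i) = aff_refl \<gamma> (of_int c) ` f i"
    and fj: "f (Suc j) = aff_refl \<gamma> (of_int c) ` f j"
  shows "\<exists>h. (\<forall>m. Suc m < L - 1 \<longrightarrow> (\<exists>\<beta>. alcove_edge R (h m) \<beta> (h (Suc m)))) \<and> h 0 = f 0 \<and> h (L - 2) = f L"
proof -
  define \<sigma> where "\<sigma> = aff_refl \<gamma> (of_int c)"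
  have inv: "\<sigma> ` \<sigma> ` X = X" for X
    using aff_refl_aff_refl[OF root_nonzero[OF g]] by (simp add: \<sigma>_def image_image)
  have fi': "f i = \<sigma> ` f (Suc i)" using fi inv by (simp add: \<sigma>_def)
  have fj': "f (Suc j) = \<sigma> ` f j" using fj by (simp add: \<sigma>_def)
  define h where "h m = (if m < i then f m else if m < j then \<sigma> ` f (Suc m) else f (m + 2))" for m
  have he: "\<exists>\<beta>. alcove_edge R (h m) \<beta> (h (Suc m))" if m: "Suc m < L - 1" for m
  proof -
    consider "Suc m < i" | "Suc m = i" | "i \<le> m \<and> Suc m < j" | "Suc m = j" | "j \<le> m" by linarith
    then show ?thesis
    proof cases
      case 1 then show ?thesis using edges m by (simp add: h_def)
    next
      case 2 then have "h m = f m" "h (Suc m) = f (Suc m)" using fi' ij by (auto simp: h_def)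
      then show ?thesis using edges m by simp
    next
      case 3 then have "h m = \<sigma> ` f (Suc m)" "h (Suc m) = \<sigma> ` f (Suc (Suc m))" by (auto simp: h_def)
      moreover obtain \<beta> where "alcove_edge R (f (Suc m)) \<beta> (f (Suc (Suc m)))" using edges m by fastforce
      ultimately show ?thesis using alcove_edge_aff_refl_image[OF _ g] \<sigma>_def by metis
    next
      case 4 then have "h m = f (Suc j)" "h (Suc m) = f (Suc (Suc j))" using fj' ij by (auto simp: h_def)
      then show ?thesis using edges m 4 by simp
    next
      case 5 then have "h m = f (m + 2)" "h (Suc m) = f (Suc (m + 2))" using ij by (auto simp: h_def)
      then show ?thesis using edges m by simp
    qed
  qed
  have h0: "h 0 = f 0"
  proof (cases "i = 0")
    case True then show ?thesis using fi' ij by (simp add: h_def)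
  next
    case False then show ?thesis by (simp add: h_def)
  qed
  have hL: "h (L - 2) = f L"
  proof (cases "j = L - 1")
    case True
    have "\<not> L - 2 < i" "L - 2 < j" using True ij by linarith+
    then have "h (L - 2) = \<sigma> ` f (Suc (L - 2))" by (simp add: h_def)
    also have "Suc (L - 2) = j" using True ij by simp
    finally show ?thesis using fj' True ij by simp
  next
    case False
    then have "\<not> L - 2 < j" "\<not> L - 2 < i" "Suc (Suc (L - 2)) = L" using ij by linarith+
    then show ?thesis by (simp add: h_def)
  qed
  show ?thesis using he h0 hL by blast
qed

lemma lambda_chain_no_repeated_wall:
  assumes LC: "lambda_chain R S lam \<Gamma>"
    and ij: "i < j" "j < length \<Gamma>" and g: "\<gamma> \<in> R"
    and fi: "chain_alcoves R S \<Gamma> (Suc i) = aff_refl \<gamma> (of_int c) ` chain_alcoves R S \<Gamma> i"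
    and fj: "chain_alcoves R S \<Gamma> (Suc j) = aff_refl \<gamma> (of_int c) ` chain_alcoves R S \<Gamma> j"
  shows False
proof -
  let ?f = "chain_alcoves R S \<Gamma>"
  let ?L = "length \<Gamma>"
  have edges: "\<forall>m<?L. \<exists>\<beta>. alcove_edge R (?f m) \<beta> (?f (Suc m))" using LC unfolding lambda_chain_def by blast
  obtain h where h: "\<forall>m. Suc m < ?L - 1 \<longrightarrow> (\<exists>\<beta>. alcove_edge R (h m) \<beta> (h (Suc m)))" "h 0 = ?f 0" "h (?L - 2) = ?f ?L"
    using alcove_path_shortcut[OF edges ij g fi fj] by blast
  define As where "As = map h [0..<?L - 1]"
  have len: "length As = ?L - 1" by (simp add: As_def)
  have L2: "?L \<ge> 2" using ij by simp
  have ne: "As \<noteq> []" using L2 len by auto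
  have path: "alcove_path R As" unfolding alcove_path_def using h(1) by (simp add: As_def)
  have hd: "hd As = fund_alcove R S" using h(2) L2 by (simp add: As_def hd_map)
  have lst: "last As = (\<lambda>\<nu>. \<nu> - lam) ` fund_alcove R S"
  proof -
    have "last As = As ! (?L - 2)" using ne len L2 by (simp add: last_conv_nth numeral_2_eq_2)
    also have "\<dots> = h (?L - 2)" using L2 by (simp add: As_def)
    also have "\<dots> = ?f ?L" by (rule h(3))
    also have "\<dots> = (\<lambda>\<nu>. \<nu> - lam) ` fund_alcove R S" using LC unfolding lambda_chain_def by blast
    finally show ?thesis .
  qed
  have "?L \<le> length As - 1" using LC ne path hd lst unfolding lambda_chain_def by blast
  then show False using len L2 by simp
qed

end

section \<open>Levels along a \<lambda>-chain\<close>

lemma int_seq_crossing: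
  fixes a :: "nat \<Rightarrow> int"
  assumes step: "\<forall>m. s \<le> m \<and> m < e \<longrightarrow> a (Suc m) \<ge> a m - 1"
    and as: "a s \<ge> 1" and ae: "a e \<le> 0" and se: "s \<le> e"
  shows "\<exists>m. s \<le> m \<and> m < e \<and> a m \<ge> 1 \<and> a (Suc m) \<le> 0 \<and> a (Suc m) \<ge> a m - 1"
proof -
  define M where "M = {m. s \<le> m \<and> m \<le> e \<and> a m \<ge> 1}"
  have fin: "finite M" by (simp add: M_def)
  have sM: "s \<in> M" using as se by (simp add: M_def)
  define m where "m = Max M"
  have mM: "m \<in> M" using fin sM Max_in m_def by blast
  have "m \<le> e" "a m \<ge> 1" using mM by (auto simp: M_def)
  then have me: "m < e" using ae by (metis le_neq_implies_less not_one_le_zero order_trans)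
  have "Suc m \<notin> M" using fin m_def by (metis Max_ge Suc_n_not_le_n)
  then have "a (Suc m) \<le> 0" using mM me by (auto simp: M_def)
  then show ?thesis using mM me step by (auto simp: M_def)
qed

declare chain_alcoves.simps(2)[simp del]

context
  fixes R S :: "'a::euclidean_space set" and lam :: 'a and \<Gamma> :: "'a list"
  assumes RS: "root_system R" and LC: "lambda_chain R S lam \<Gamma>" and DOM: "dominant R S lam"
begin

abbreviation "A\<^sub>\<Gamma> \<equiv> chain_alcoves R S \<Gamma>"

lemma lambda_chain_edge: "m < length \<Gamma> \<Longrightarrow> \<Gamma> ! m \<in> R \<and> alcove_edge R (A\<^sub>\<Gamma> m) (- (\<Gamma> ! m)) (A\<^sub>\<Gamma> (Suc m))"
  using LC unfolding lambda_chain_def by blast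

lemma is_alcove_chain_alcoves: "m \<le> length \<Gamma> \<Longrightarrow> 0 < length \<Gamma> \<Longrightarrow> is_alcove R (A\<^sub>\<Gamma> m)"
proof -
  assume m: "m \<le> length \<Gamma>" and L: "0 < length \<Gamma>"
  show ?thesis
  proof (cases "m < length \<Gamma>")
    case True then show ?thesis using lambda_chain_edge[OF True] by (simp add: alcove_edge_def)
  next
    case False then have e: "m = Suc (length \<Gamma> - 1)" using m L by simp
    have "alcove_edge R (A\<^sub>\<Gamma> (length \<Gamma> - 1)) (- (\<Gamma> ! (length \<Gamma> - 1))) (A\<^sub>\<Gamma> (Suc (length \<Gamma> - 1)))"
      using lambda_chain_edge[of "length \<Gamma> - 1"] L by simp
    then show ?thesis unfolding e alcove_edge_def by blast
  qed
qed

lemma chain_level_step: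
  assumes m: "m < length \<Gamma>" and d: "\<delta> \<in> R"
  shows "alcove_level (A\<^sub>\<Gamma> (Suc m)) \<delta> = alcove_level (A\<^sub>\<Gamma> m) \<delta> + (if \<Gamma> ! m = - \<delta> then 1 else if \<Gamma> ! m = \<delta> then -1 else 0)
     \<and> ((\<Gamma> ! m = \<delta> \<or> \<Gamma> ! m = - \<delta>) \<longrightarrow>
          A\<^sub>\<Gamma> (Suc m) = aff_refl \<delta> (of_int (max (alcove_level (A\<^sub>\<Gamma> m) \<delta>) (alcove_level (A\<^sub>\<Gamma> (Suc m)) \<delta>))) ` A\<^sub>\<Gamma> m)"
proof -
  have g: "\<Gamma> ! m \<in> R" and E: "alcove_edge R (A\<^sub>\<Gamma> m) (- (\<Gamma> ! m)) (A\<^sub>\<Gamma> (Suc m))" using lambda_chain_edge[OF m] by auto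
  have A: "is_alcove R (A\<^sub>\<Gamma> m)" and B: "is_alcove R (A\<^sub>\<Gamma> (Suc m))" using E by (auto simp: alcove_edge_def)
  obtain k :: int where Bk: "A\<^sub>\<Gamma> (Suc m) = aff_refl (- (\<Gamma> ! m)) (of_int k) ` A\<^sub>\<Gamma> m"
    and iA: "alcove_level (A\<^sub>\<Gamma> m) (- (\<Gamma> ! m)) = k - 1" and iB: "alcove_level (A\<^sub>\<Gamma> (Suc m)) (- (\<Gamma> ! m)) = k"
    and oth: "\<forall>\<delta>\<in>R. \<delta> \<noteq> - (\<Gamma> ! m) \<and> \<delta> \<noteq> - (- (\<Gamma> ! m)) \<longrightarrow> alcove_level (A\<^sub>\<Gamma> (Suc m)) \<delta> = alcove_level (A\<^sub>\<Gamma> m) \<delta>"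
    using alcove_edge_levels[OF RS E] by blast
  have dnz: "\<delta> \<noteq> 0" using root_nonzero[OF RS d] .
  consider "\<Gamma> ! m = \<delta>" | "\<Gamma> ! m = - \<delta>" | "\<Gamma> ! m \<noteq> \<delta> \<and> \<Gamma> ! m \<noteq> - \<delta>" by blast
  then show ?thesis
  proof cases
    case 1
    have nd: "\<delta> \<noteq> - \<delta>" by (rule minus_neq_self[OF dnz])
    have a: "alcove_level (A\<^sub>\<Gamma> m) \<delta> = - k" using iA alcove_level_minus[OF RS A d] 1 by simp
    have b: "alcove_level (A\<^sub>\<Gamma> (Suc m)) \<delta> = - k - 1" using iB alcove_level_minus[OF RS B d] 1 by simp
    have "A\<^sub>\<Gamma> (Suc m) = aff_refl \<delta> (of_int (- k)) ` A\<^sub>\<Gamma> m" using Bk 1 by (simp add: aff_refl_minus)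
    then show ?thesis using a b 1 nd by (simp add: max_def)
  next
    case 2
    have a: "alcove_level (A\<^sub>\<Gamma> m) \<delta> = k - 1" using iA 2 by simp
    have b: "alcove_level (A\<^sub>\<Gamma> (Suc m)) \<delta> = k" using iB 2 by simp
    have "A\<^sub>\<Gamma> (Suc m) = aff_refl \<delta> (of_int k) ` A\<^sub>\<Gamma> m" using Bk 2 by simp
    then show ?thesis using a b 2 by (simp add: max_def)
  next
    case 3
    have "alcove_level (A\<^sub>\<Gamma> (Suc m)) \<delta> = alcove_level (A\<^sub>\<Gamma> m) \<delta>" using oth d 3 by (metis minus_minus)
    then show ?thesis using 3 by simp
  qed
qed

lemma level_fund_alcove:
  assumes L: "0 < length \<Gamma>" and d: "\<delta> \<in> pos_roots R S"
  shows "alcove_level (A\<^sub>\<Gamma> 0) \<delta> = 0"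
proof -
  have A: "is_alcove R (A\<^sub>\<Gamma> 0)" by (rule is_alcove_chain_alcoves[of 0, OF le0 L])
  have dR: "\<delta> \<in> R" using d by (simp add: pos_roots_def)
  obtain x where x: "x \<in> A\<^sub>\<Gamma> 0" using alcove_nonempty[OF RS A] by blast
  then have "0 < pairing x \<delta>" "pairing x \<delta> < 1" using d by (auto simp: fund_alcove_def)
  then show ?thesis using alcove_level_unique[OF RS A x dR, of 0] by simp
qed

lemma level_final_alcove:
  assumes L: "0 < length \<Gamma>" and d: "\<delta> \<in> pos_roots R S"
  shows "alcove_level (A\<^sub>\<Gamma> (length \<Gamma>)) \<delta> \<le> 0"
proof -
  have A: "is_alcove R (A\<^sub>\<Gamma> (length \<Gamma>))" using is_alcove_chain_alcoves[OF _ L] by simp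
  have dR: "\<delta> \<in> R" using d by (simp add: pos_roots_def)
  have fL: "A\<^sub>\<Gamma> (length \<Gamma>) = (\<lambda>\<nu>. \<nu> - lam) ` fund_alcove R S" using LC unfolding lambda_chain_def by blast
  obtain y where y: "y \<in> A\<^sub>\<Gamma> (length \<Gamma>)" using alcove_nonempty[OF RS A] by blast
  then obtain x where x: "x \<in> fund_alcove R S" "y = x - lam" using fL by blast
  have b: "0 < pairing x \<delta>" "pairing x \<delta> < 1" using d x by (auto simp: fund_alcove_def)
  have "pairing lam \<delta> \<in> \<int>" using DOM dR unfolding dominant_def by blast
  then obtain N where N: "pairing lam \<delta> = of_int N" by (metis Ints_cases)
  have "pairing lam \<delta> \<ge> 0" using DOM d unfolding dominant_def by blast
  then have N0: "N \<ge> 0" using N by simp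
  have "pairing y \<delta> = pairing x \<delta> - of_int N" using x N by (simp add: pairing_diff_left)
  then have "alcove_level (A\<^sub>\<Gamma> (length \<Gamma>)) \<delta> = - N" using alcove_level_unique[OF RS A y dR, of "- N"] b by simp
  then show ?thesis using N0 by simp
qed

lemma chain_wall_crossed_earlier:
  assumes n0: "n0 < length \<Gamma>" and d: "\<delta> \<in> R"
    and levels: "\<forall>j\<le>n0. alcove_level (A\<^sub>\<Gamma> j) \<delta> = - int (card {i. i < j \<and> \<Gamma> ! i = \<delta>})"
    and occ: "card {i. i < n0 \<and> \<Gamma> ! i = \<delta>} \<noteq> 0"
  shows "\<exists>j<n0. A\<^sub>\<Gamma> (Suc j) = aff_refl \<delta> (of_int (1 - int (card {i. i < n0 \<and> \<Gamma> ! i = \<delta>}))) ` A\<^sub>\<Gamma> j"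
proof -
  define D where "D = {i. i < n0 \<and> \<Gamma> ! i = \<delta>}"
  have fin: "finite D" by (simp add: D_def)
  define j0 where "j0 = Max D"
  have j0: "j0 < n0" "\<Gamma> ! j0 = \<delta>"
    using Max_in[OF fin] occ by (auto simp: j0_def D_def)
  have "D = insert j0 {i. i < j0 \<and> \<Gamma> ! i = \<delta>}"
  proof (intro equalityI subsetI)
    fix i assume "i \<in> D"
    moreover from this have "i \<le> j0" unfolding j0_def by (rule Max_ge[OF fin])
    ultimately show "i \<in> insert j0 {i. i < j0 \<and> \<Gamma> ! i = \<delta>}" by (auto simp: D_def)
  qed (use j0 in \<open>auto simp: D_def\<close>)
  then have "card D = Suc (card {i. i < j0 \<and> \<Gamma> ! i = \<delta>})" by simp
  then have level_j0: "alcove_level (A\<^sub>\<Gamma> j0) \<delta> = 1 - int (card D)"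
    using levels j0(1) by simp
  have "alcove_level (A\<^sub>\<Gamma> (Suc j0)) \<delta> = alcove_level (A\<^sub>\<Gamma> j0) \<delta> - 1"
    and "A\<^sub>\<Gamma> (Suc j0) = aff_refl \<delta> (of_int (max (alcove_level (A\<^sub>\<Gamma> j0) \<delta>)
                                                 (alcove_level (A\<^sub>\<Gamma> (Suc j0)) \<delta>))) ` A\<^sub>\<Gamma> j0"
    using chain_level_step[of j0 \<delta>] j0 n0 d minus_neq_self[OF root_nonzero[OF RS d]] by auto
  then show ?thesis using level_j0 j0(1) by (auto simp: D_def)
qed

lemma chain_wall_crossed_later:
  assumes L: "0 < length \<Gamma>" and d: "\<delta> \<in> pos_roots R S" and n0: "n0 < length \<Gamma>"
    and level: "alcove_level (A\<^sub>\<Gamma> (Suc n0)) \<delta> = 1"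
  shows "\<exists>m. n0 < m \<and> m < length \<Gamma> \<and> A\<^sub>\<Gamma> (Suc m) = aff_refl \<delta> 1 ` A\<^sub>\<Gamma> m"
proof -
  let ?a = "\<lambda>m. alcove_level (A\<^sub>\<Gamma> m) \<delta>"
  have dR: "\<delta> \<in> R" using d by (simp add: pos_roots_def)
  have "\<forall>m. Suc n0 \<le> m \<and> m < length \<Gamma> \<longrightarrow> ?a (Suc m) \<ge> ?a m - 1"
    using chain_level_step[OF _ dR] by fastforce
  then obtain m where m: "Suc n0 \<le> m" "m < length \<Gamma>" "?a m \<ge> 1" "?a (Suc m) \<le> 0"
    using int_seq_crossing[of "Suc n0" "length \<Gamma>" ?a] level level_final_alcove[OF L d] n0 by auto
  have step: "?a (Suc m) = ?a m + (if \<Gamma> ! m = - \<delta> then 1 else if \<Gamma> ! m = \<delta> then -1 else 0)"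
    "(\<Gamma> ! m = \<delta> \<or> \<Gamma> ! m = - \<delta>) \<longrightarrow>
       A\<^sub>\<Gamma> (Suc m) = aff_refl \<delta> (of_int (max (?a m) (?a (Suc m)))) ` A\<^sub>\<Gamma> m"
    using chain_level_step[OF m(2) dR] by blast+
  then have "\<Gamma> ! m = \<delta>" "?a m = 1" "?a (Suc m) = 0"
    using m(3,4) minus_neq_self[OF root_nonzero[OF RS dR]] by (auto split: if_splits)
  then show ?thesis using step(2) m(1,2) by (intro exI[of _ m]) simp
qed

lemma chain_not_minus_pos_root:
  assumes L: "0 < length \<Gamma>" and d: "\<delta> \<in> pos_roots R S" and n0: "n0 < length \<Gamma>"
    and levels: "\<forall>j\<le>n0. alcove_level (A\<^sub>\<Gamma> j) \<delta> = - int (card {i. i < j \<and> \<Gamma> ! i = \<delta>})"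
  shows "\<Gamma> ! n0 \<noteq> - \<delta>"
proof
  assume neg: "\<Gamma> ! n0 = - \<delta>"
  define c where "c = card {i. i < n0 \<and> \<Gamma> ! i = \<delta>}"
  have dR: "\<delta> \<in> R" using d by (simp add: pos_roots_def)
  have "alcove_level (A\<^sub>\<Gamma> (Suc n0)) \<delta> = 1 - int c"
    and "A\<^sub>\<Gamma> (Suc n0) = aff_refl \<delta> (of_int (max (alcove_level (A\<^sub>\<Gamma> n0) \<delta>)
                                               (alcove_level (A\<^sub>\<Gamma> (Suc n0)) \<delta>))) ` A\<^sub>\<Gamma> n0"
    using chain_level_step[OF n0 dR] levels neg by (auto simp: c_def)
  then have level: "alcove_level (A\<^sub>\<Gamma> (Suc n0)) \<delta> = 1 - int c"
    and wall: "A\<^sub>\<Gamma> (Suc n0) = aff_refl \<delta> (of_int (1 - int c)) ` A\<^sub>\<Gamma> n0"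
    using levels by (auto simp: c_def)
  show False
  proof (cases "c = 0")
    case True
    then obtain m where "n0 < m" "m < length \<Gamma>" "A\<^sub>\<Gamma> (Suc m) = aff_refl \<delta> (of_int 1) ` A\<^sub>\<Gamma> m"
      using chain_wall_crossed_later[OF L d n0] level by auto
    moreover have "A\<^sub>\<Gamma> (Suc n0) = aff_refl \<delta> (of_int 1) ` A\<^sub>\<Gamma> n0" using wall True by simp
    ultimately show False using lambda_chain_no_repeated_wall[OF RS LC _ _ dR] by blast
  next
    case False
    then obtain j where "j < n0" "A\<^sub>\<Gamma> (Suc j) = aff_refl \<delta> (of_int (1 - int c)) ` A\<^sub>\<Gamma> j"
      using chain_wall_crossed_earlier[OF n0 dR levels] by (auto simp: c_def)
    then show False using lambda_chain_no_repeated_wall[OF RS LC _ n0 dR] wall by blast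
  qed
qed

lemma chain_level_pos_root:
  assumes L: "0 < length \<Gamma>" and d: "\<delta> \<in> pos_roots R S"
  shows "n \<le> length \<Gamma> \<Longrightarrow> alcove_level (A\<^sub>\<Gamma> n) \<delta> = - int (card {j. j < n \<and> \<Gamma> ! j = \<delta>})"
proof (induction n rule: less_induct)
  case (less n)
  have dR: "\<delta> \<in> R" using d by (simp add: pos_roots_def)
  show ?case
  proof (cases n)
    case 0
    then show ?thesis using level_fund_alcove[OF L d] by simp
  next
    case (Suc n0)
    have n0: "n0 < length \<Gamma>" using less.prems Suc by simp
    have levels: "\<forall>j\<le>n0. alcove_level (A\<^sub>\<Gamma> j) \<delta> = - int (card {i. i < j \<and> \<Gamma> ! i = \<delta>})"
      using less.IH Suc less.prems by auto
    have "\<Gamma> ! n0 \<noteq> - \<delta>" by (rule chain_not_minus_pos_root[OF L d n0 levels])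
    moreover have "{j. j < Suc n0 \<and> \<Gamma> ! j = \<delta>} = (if \<Gamma> ! n0 = \<delta>
        then insert n0 {j. j < n0 \<and> \<Gamma> ! j = \<delta>} else {j. j < n0 \<and> \<Gamma> ! j = \<delta>})"
      by (auto simp: less_Suc_eq)
    ultimately show ?thesis
      using chain_level_step[OF n0 dR] levels Suc by (simp split: if_splits)
  qed
qed

end

section \<open>Positive roots\<close>

definition height :: "'a::euclidean_space set \<Rightarrow> 'a \<Rightarrow> real" where
  "height S x = (\<Sum>s\<in>S. representation S x s)"

context
  fixes R S :: "'a::euclidean_space set"
  assumes RS: "root_system R" and BS: "is_base R S"
begin

lemma independent_base: "independent S"
  using BS by (simp add: is_base_def)

lemma finite_base: "finite S"
  using independent_base by (rule finiteI_independent)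

lemma root_base_comb: "\<beta> \<in> R \<Longrightarrow> \<exists>c. ((\<forall>\<alpha>\<in>S. c \<alpha> \<ge> 0) \<or> (\<forall>\<alpha>\<in>S. c \<alpha> \<le> 0)) \<and> \<beta> = (\<Sum>\<alpha>\<in>S. c \<alpha> *\<^sub>R \<alpha>)"
  using BS unfolding is_base_def by blast

lemma in_span_base: "x \<in> span S"
proof -
  have "R \<subseteq> span S"
  proof
    fix \<beta> assume "\<beta> \<in> R"
    then obtain c where "\<beta> = (\<Sum>\<alpha>\<in>S. c \<alpha> *\<^sub>R \<alpha>)" using root_base_comb by blast
    then show "\<beta> \<in> span S" by (simp add: span_sum span_scale span_base)
  qed
  then have "span R \<subseteq> span S" by (simp add: span_minimal)
  moreover have "span R = UNIV" using RS by (simp add: root_system_def)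
  ultimately show ?thesis by auto
qed

lemma height_add: "height S (x + y) = height S x + height S y"
proof -
  have "representation S (x + y) = (\<lambda>b. representation S x b + representation S y b)"
    by (rule representation_add[OF independent_base in_span_base in_span_base])
  then show ?thesis unfolding height_def by (simp add: sum.distrib)
qed
lemma height_scaleR: "height S (c *\<^sub>R x) = c * height S x"
proof -
  have "representation S (c *\<^sub>R x) = (\<lambda>b. c * representation S x b)"
    by (rule representation_scale[OF independent_base in_span_base])
  then show ?thesis unfolding height_def by (simp add: sum_distrib_left)
qed
lemma linear_height: "linear (height S)"
  by (rule linearI) (simp_all add: height_add height_scaleR)

lemma height_minus: "height S (- x) = - height S x"
  using height_scaleR[of "-1" x] by simp

lemma height_sum_simple_roots:
  "height S (\<Sum>\<alpha>\<in>S. c \<alpha> *\<^sub>R \<alpha>) = (\<Sum>\<alpha>\<in>S. c \<alpha>)"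
proof -
  have r1: "representation S (\<Sum>\<alpha>\<in>S. c \<alpha> *\<^sub>R \<alpha>) = (\<lambda>b. \<Sum>\<alpha>\<in>S. representation S (c \<alpha> *\<^sub>R \<alpha>) b)"
    by (rule representation_sum[OF independent_base in_span_base])
  have r2: "representation S (c \<alpha> *\<^sub>R \<alpha>) b = c \<alpha> * (if b = \<alpha> then 1 else 0)" if "\<alpha> \<in> S" for \<alpha> b
  proof -
    have "representation S (c \<alpha> *\<^sub>R \<alpha>) = (\<lambda>b. c \<alpha> * representation S \<alpha> b)"
      by (rule representation_scale[OF independent_base in_span_base])
    moreover have "representation S \<alpha> = (\<lambda>v. if v = \<alpha> then 1 else 0)"
      by (rule representation_basis[OF independent_base that])
    ultimately show ?thesis by simp
  qed
  have r3: "representation S (\<Sum>\<alpha>\<in>S. c \<alpha> *\<^sub>R \<alpha>) b = c b" if "b \<in> S" for b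
  proof -
    have "representation S (\<Sum>\<alpha>\<in>S. c \<alpha> *\<^sub>R \<alpha>) b = (\<Sum>\<alpha>\<in>S. c \<alpha> * (if b = \<alpha> then 1 else 0))"
      unfolding r1 using r2 by (intro sum.cong) auto
    also have "\<dots> = (\<Sum>\<alpha>\<in>S. (if b = \<alpha> then c \<alpha> else 0))" by (intro sum.cong) auto
    also have "\<dots> = c b" using that finite_base by (simp add: sum.delta)
    finally show ?thesis .
  qed
  show ?thesis unfolding height_def using r3 by (intro sum.cong) auto
qed

lemma height_pos_root: assumes "\<gamma> \<in> pos_roots R S" shows "height S \<gamma> > 0"
proof -
  have g: "\<gamma> \<in> R" "nonneg_comb S \<gamma>" using assms by (auto simp: pos_roots_def)
  obtain c where c: "\<forall>\<alpha>\<in>S. c \<alpha> \<ge> 0" "\<gamma> = (\<Sum>\<alpha>\<in>S. c \<alpha> *\<^sub>R \<alpha>)" using g(2) by (auto simp: nonneg_comb_def)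
  have p: "height S \<gamma> = (\<Sum>\<alpha>\<in>S. c \<alpha>)" unfolding c(2) by (rule height_sum_simple_roots)
  have "(\<Sum>\<alpha>\<in>S. c \<alpha>) \<ge> 0" using c(1) by (simp add: sum_nonneg)
  moreover have "(\<Sum>\<alpha>\<in>S. c \<alpha>) \<noteq> 0"
  proof
    assume "(\<Sum>\<alpha>\<in>S. c \<alpha>) = 0"
    then have "\<forall>\<alpha>\<in>S. c \<alpha> = 0" using sum_nonneg_eq_0_iff[OF finite_base] c(1) by blast
    then have "\<gamma> = 0" unfolding c(2) by simp
    then show False using root_nonzero[OF RS g(1)] by simp
  qed
  ultimately show ?thesis using p by simp
qed

lemma root_pos_or_neg: assumes "\<gamma> \<in> R" shows "\<gamma> \<in> pos_roots R S \<or> - \<gamma> \<in> pos_roots R S"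
proof -
  obtain c where c1: "(\<forall>\<alpha>\<in>S. c \<alpha> \<ge> 0) \<or> (\<forall>\<alpha>\<in>S. c \<alpha> \<le> 0)" and c2: "\<gamma> = (\<Sum>\<alpha>\<in>S. c \<alpha> *\<^sub>R \<alpha>)"
    using root_base_comb[OF assms] by blast
  have n: "- \<gamma> \<in> R" using minus_root[OF RS assms] .
  show ?thesis
  proof (cases "\<forall>\<alpha>\<in>S. c \<alpha> \<ge> 0")
    case True
    then have "nonneg_comb S \<gamma>" unfolding nonneg_comb_def using c2 by (intro exI[of _ c]) simp
    then show ?thesis using assms by (simp add: pos_roots_def)
  next
    case False
    then have "\<forall>\<alpha>\<in>S. c \<alpha> \<le> 0" using c1 by blast
    then have h1: "\<forall>\<alpha>\<in>S. (- c \<alpha>) \<ge> 0" by simp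
    have h2: "- \<gamma> = (\<Sum>\<alpha>\<in>S. (- c \<alpha>) *\<^sub>R \<alpha>)" unfolding c2 scaleR_minus_left sum_negf ..
    have "nonneg_comb S (- \<gamma>)" unfolding nonneg_comb_def using h1 h2 by (intro exI[of _ "\<lambda>a. - c a"]) simp
    then show ?thesis using n by (simp add: pos_roots_def)
  qed
qed

lemma pos_root_minus_not_pos: "\<gamma> \<in> pos_roots R S \<Longrightarrow> - \<gamma> \<notin> pos_roots R S"
  using height_pos_root[of \<gamma>] height_pos_root[of "- \<gamma>"] height_minus[of \<gamma>] by auto

lemma height_coroot_pos: "\<gamma> \<in> pos_roots R S \<Longrightarrow> height S (coroot \<gamma>) > 0"
  using height_pos_root[of \<gamma>] root_nonzero[OF RS, of \<gamma>]
  by (simp add: coroot_def height_scaleR pos_roots_def)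

end

section \<open>Planar cones\<close>

definition indep2 :: "'a::real_vector \<Rightarrow> 'a \<Rightarrow> bool" where
  "indep2 A B \<longleftrightarrow> (\<forall>c d. c *\<^sub>R A + d *\<^sub>R B = 0 \<longrightarrow> c = 0 \<and> d = 0)"

lemma indep2_commute: "indep2 A B \<Longrightarrow> indep2 B A"
  unfolding indep2_def by (metis add.commute)

lemma indep2_coeffs_unique:
  assumes "indep2 A B" "x1 *\<^sub>R A + y1 *\<^sub>R B = x2 *\<^sub>R A + y2 *\<^sub>R B"
  shows "x1 = x2 \<and> y1 = y2"
proof -
  have "(x1 - x2) *\<^sub>R A + (y1 - y2) *\<^sub>R B = 0" using assms(2) by (simp add: algebra_simps)
  then show ?thesis using assms(1) unfolding indep2_def by fastforce
qed

lemma indep2_iff_not_in_span: "indep2 A B \<longleftrightarrow> A \<noteq> 0 \<and> B \<notin> span {A}"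
proof
  assume ind: "indep2 A B"
  have "A \<noteq> 0" using ind[unfolded indep2_def, rule_format, of 1 0] by auto
  moreover have "B \<notin> span {A}"
  proof
    assume "B \<in> span {A}"
    then obtain k where "B = k *\<^sub>R A" by (auto simp: span_singleton)
    then show False using ind[unfolded indep2_def, rule_format, of k "-1"] by simp
  qed
  ultimately show "A \<noteq> 0 \<and> B \<notin> span {A}" ..
next
  assume A: "A \<noteq> 0 \<and> B \<notin> span {A}"
  show "indep2 A B" unfolding indep2_def
  proof (intro allI impI)
    fix c d assume comb: "c *\<^sub>R A + d *\<^sub>R B = 0"
    have "d = 0"
    proof (rule ccontr)
      assume d: "d \<noteq> 0"
      have "B = (1 / d) *\<^sub>R (d *\<^sub>R B)" using d by simp
      also have "d *\<^sub>R B = - (c *\<^sub>R A)" using comb by (simp add: eq_neg_iff_add_eq_0 add.commute)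
      finally have "B = (- c / d) *\<^sub>R A" by simp
      then have "B \<in> span {A}" by (simp add: span_base span_scale span_neg)
      then show False using A by simp
    qed
    then show "c = 0 \<and> d = 0" using comb A by simp
  qed
qed

lemma span_pair_comb: "x \<in> span {a, b} \<Longrightarrow> \<exists>c d. x = c *\<^sub>R a + d *\<^sub>R b"
proof -
  assume "x \<in> span {a, b}"
  then obtain k where "x - k *\<^sub>R a \<in> span {b}" by (auto simp: span_insert)
  then obtain k' where "x - k *\<^sub>R a = k' *\<^sub>R b" by (auto simp: span_singleton)
  then have "x = k *\<^sub>R a + k' *\<^sub>R b" by (simp add: algebra_simps)
  then show ?thesis by blast
qed

lemma slope_between_cone:
  fixes \<phi> \<psi> :: "'a::real_vector \<Rightarrow> real"
  assumes lin: "linear \<phi>" "linear \<psi>"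
    and pos: "\<phi> u1 > 0" "\<phi> u2 > 0" "\<phi> x > 0"
    and slopes: "\<psi> u1 / \<phi> u1 \<le> \<psi> x / \<phi> x" "\<psi> x / \<phi> x \<le> \<psi> u2 / \<phi> u2"
      "\<psi> u1 / \<phi> u1 < \<psi> u2 / \<phi> u2"
  shows "\<exists>c d. c \<ge> 0 \<and> d \<ge> 0 \<and> \<phi> (x - (c *\<^sub>R u1 + d *\<^sub>R u2)) = 0 \<and>
      \<psi> (x - (c *\<^sub>R u1 + d *\<^sub>R u2)) = 0"
proof -
  define s where "s v = \<psi> v / \<phi> v" for v
  define D where "D = s u2 - s u1"
  define c where "c = \<phi> x * (s u2 - s x) / (\<phi> u1 * D)"
  define d where "d = \<phi> x * (s x - s u1) / (\<phi> u2 * D)"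
  have D: "D > 0" using slopes by (simp add: D_def s_def)
  have "c \<ge> 0" "d \<ge> 0" using pos D slopes by (simp_all add: c_def d_def s_def)
  have expand: "f (x - (c *\<^sub>R u1 + d *\<^sub>R u2)) = f x - c * f u1 - d * f u2" if "linear f" for f :: "'a \<Rightarrow> real"
    by (simp add: linear_diff[OF that] linear_add[OF that] linear_scale[OF that])
  have \<psi>: "\<psi> v = s v * \<phi> v" if "\<phi> v > 0" for v using that by (simp add: s_def)
  have "\<phi> x - c * \<phi> u1 - d * \<phi> u2 = 0" using pos D by (simp add: c_def d_def D_def field_simps)
  moreover have "\<psi> x - c * \<psi> u1 - d * \<psi> u2 = 0"
    using pos D by (simp add: \<psi> c_def d_def D_def field_simps)
  ultimately show ?thesis using \<open>c \<ge> 0\<close> \<open>d \<ge> 0\<close> expand lin by metis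
qed

lemma extreme_slopes_cone:
  fixes X :: "'a::real_vector set" and \<phi> \<psi> :: "'a \<Rightarrow> real"
  assumes lin: "linear \<phi>" "linear \<psi>" and fin: "finite X" and pos: "\<forall>x\<in>X. \<phi> x > 0"
    and sep: "\<forall>v\<in>span X. \<phi> v = 0 \<longrightarrow> \<psi> v = 0 \<longrightarrow> v = 0"
    and two: "a \<in> X" "b \<in> X" "\<psi> a / \<phi> a < \<psi> b / \<phi> b"
  shows "\<exists>u1\<in>X. \<exists>u2\<in>X. indep2 u1 u2 \<and> (\<forall>x\<in>X. \<exists>c d. c \<ge> 0 \<and> d \<ge> 0 \<and> x = c *\<^sub>R u1 + d *\<^sub>R u2)"
proof -
  define s where "s v = \<psi> v / \<phi> v" for v
  have ne: "s ` X \<noteq> {}" "finite (s ` X)" using two(1) fin by auto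
  obtain u1 where u1: "u1 \<in> X" "s u1 = Min (s ` X)" using Min_in[OF ne(2,1)] by auto
  obtain u2 where u2: "u2 \<in> X" "s u2 = Max (s ` X)" using Max_in[OF ne(2,1)] by auto
  have bounds: "s u1 \<le> s x" "s x \<le> s u2" if "x \<in> X" for x
    using that u1(2) u2(2) fin by simp_all
  have lt: "s u1 < s u2" using bounds[OF two(1)] bounds[OF two(2)] two(3) by (simp add: s_def)
  have ind: "indep2 u1 u2" unfolding indep2_def
  proof (intro allI impI)
    fix c d assume comb: "c *\<^sub>R u1 + d *\<^sub>R u2 = 0"
    have eq: "c * f u1 + d * f u2 = 0" if "linear f" for f :: "'a \<Rightarrow> real"
      using arg_cong[OF comb, of f] by (simp add: linear_add[OF that] linear_scale[OF that] linear_0[OF that])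
    have \<psi>: "\<psi> v = s v * \<phi> v" if "v \<in> X" for v using pos that by (auto simp: s_def)
    have "d * \<phi> u2 * (s u2 - s u1) = 0"
      using eq[OF lin(1)] eq[OF lin(2)] \<psi>[OF u1(1)] \<psi>[OF u2(1)] by algebra
    then have "d = 0" using lt pos u2(1) by fastforce
    then show "c = 0 \<and> d = 0" using eq[OF lin(1)] pos u1(1) by fastforce
  qed
  have "\<exists>c d. c \<ge> 0 \<and> d \<ge> 0 \<and> x = c *\<^sub>R u1 + d *\<^sub>R u2" if x: "x \<in> X" for x
  proof -
    obtain c d where cd: "c \<ge> 0" "d \<ge> 0" "\<phi> (x - (c *\<^sub>R u1 + d *\<^sub>R u2)) = 0"
      "\<psi> (x - (c *\<^sub>R u1 + d *\<^sub>R u2)) = 0"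
      using slope_between_cone[OF lin, of u1 u2 x] pos bounds[OF x] lt u1(1) u2(1) x
      unfolding s_def by blast
    have "x - (c *\<^sub>R u1 + d *\<^sub>R u2) \<in> span X"
      using x u1(1) u2(1) by (intro span_diff span_add span_scale span_base)
    then have "x - (c *\<^sub>R u1 + d *\<^sub>R u2) = 0" using sep cd(3,4) by blast
    then show ?thesis using cd(1,2) by auto
  qed
  then show ?thesis using u1(1) u2(1) ind by blast
qed

section \<open>Rank two subsystems\<close>

lemma coroot_in_span_iff: "x \<noteq> 0 \<Longrightarrow> coroot x \<in> span X \<longleftrightarrow> x \<in> span X"
proof
  assume "x \<noteq> 0" "coroot x \<in> span X"
  then have "((x \<bullet> x) / 2) *\<^sub>R coroot x \<in> span X" by (simp add: span_scale)
  then show "x \<in> span X" using \<open>x \<noteq> 0\<close> by (simp add: coroot_def)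
qed (simp add: coroot_def span_scale)

context
  fixes R S R' :: "'a::euclidean_space set"
  assumes RS: "root_system R" and BS: "is_base R S"
    and SUB: "root_subsystem R R'" and D2: "dim R' = 2"
begin

lemma subsystem_roots: "R' \<subseteq> R"
  using SUB by (simp add: root_subsystem_def)

lemma subsystem_refl: "\<alpha> \<in> R' \<Longrightarrow> \<beta> \<in> R' \<Longrightarrow> refl \<alpha> \<beta> \<in> R'"
  using SUB by (simp add: root_subsystem_def)

lemma subsystem_minus: "\<alpha> \<in> R' \<Longrightarrow> - \<alpha> \<in> R'"
  using subsystem_refl[of \<alpha> \<alpha>] refl_self[OF root_nonzero[OF RS]] subsystem_roots by auto

lemma subsystem_nonzero: "\<alpha> \<in> R' \<Longrightarrow> \<alpha> \<noteq> 0"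
  using subsystem_roots root_nonzero[OF RS] by auto

lemma subsystem_pos_or_neg: "\<delta> \<in> R' \<Longrightarrow> \<delta> \<in> R' \<inter> pos_roots R S \<or> - \<delta> \<in> R' \<inter> pos_roots R S"
  using root_pos_or_neg[OF RS BS, of \<delta>] subsystem_roots subsystem_minus by auto

lemma subsystem_pos_roots_nonempty: "R' \<inter> pos_roots R S \<noteq> {}"
  using SUB subsystem_pos_or_neg by (fastforce simp: root_subsystem_def)

lemma subsystem_indep_pos_coroots:
  obtains \<alpha>0 \<beta>0 where "\<alpha>0 \<in> R' \<inter> pos_roots R S" "\<beta>0 \<in> R' \<inter> pos_roots R S"
    "indep2 (coroot \<alpha>0) (coroot \<beta>0)" "\<forall>\<delta>\<in>R'. coroot \<delta> \<in> span {coroot \<alpha>0, coroot \<beta>0}"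
proof -
  let ?P = "R' \<inter> pos_roots R S"
  obtain \<alpha>0 where a0: "\<alpha>0 \<in> ?P" using subsystem_pos_roots_nonempty by blast
  have "\<exists>\<beta>0\<in>?P. \<beta>0 \<notin> span {\<alpha>0}"
  proof (rule ccontr)
    assume "\<not> ?thesis"
    then have "R' \<subseteq> span {\<alpha>0}" using subsystem_pos_or_neg by (metis minus_minus span_neg subsetI)
    then have "dim R' \<le> dim (span {\<alpha>0})" by (rule dim_subset)
    also have "\<dots> \<le> 1" by simp
    finally show False using D2 by simp
  qed
  then obtain \<beta>0 where b0: "\<beta>0 \<in> ?P" "\<beta>0 \<notin> span {\<alpha>0}" by blast
  have nz: "\<alpha>0 \<noteq> 0" "\<beta>0 \<noteq> 0" using a0 b0 subsystem_nonzero by auto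
  have "span {coroot \<alpha>0} \<subseteq> span {\<alpha>0}"
    using coroot_in_span_iff[OF nz(1)] by (simp add: span_minimal span_base)
  then have "coroot \<beta>0 \<notin> span {coroot \<alpha>0}" using b0(2) coroot_in_span_iff[OF nz(2)] by blast
  then have ind: "indep2 (coroot \<alpha>0) (coroot \<beta>0)"
    using nz(1) by (simp add: indep2_iff_not_in_span coroot_def)
  have "span {\<alpha>0, \<beta>0} = span R'"
  proof (rule dim_eq_span)
    show "{\<alpha>0, \<beta>0} \<subseteq> R'" using a0 b0 by auto
    have "independent (insert \<beta>0 {\<alpha>0})"
      using nz(1) b0(2) by (intro independent_insertI) (simp_all add: independent_insert independent_empty)
    then have "independent {\<alpha>0, \<beta>0}" by (simp add: insert_commute)
    moreover have "\<alpha>0 \<noteq> \<beta>0" using b0(2) by (metis span_base singletonI)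
    ultimately show "dim R' \<le> dim {\<alpha>0, \<beta>0}" using D2 by (simp add: dim_eq_card_independent)
  qed
  then have "span R' \<subseteq> span {\<alpha>0, \<beta>0}" by simp
  also have "\<dots> \<subseteq> span {coroot \<alpha>0, coroot \<beta>0}"
  proof (rule span_minimal)
    show "{\<alpha>0, \<beta>0} \<subseteq> span {coroot \<alpha>0, coroot \<beta>0}"
      using coroot_in_span_iff[OF nz(1)] coroot_in_span_iff[OF nz(2)] by (auto intro: span_base)
  qed simp
  finally have "coroot \<delta> \<in> span {coroot \<alpha>0, coroot \<beta>0}" if "\<delta> \<in> R'" for \<delta>
    using that coroot_in_span_iff[OF subsystem_nonzero[OF that]] span_base[of \<delta> R'] by blast
  then show ?thesis using that a0 b0(1) ind by blast
qed

lemma subsystem_pos_coroot_cone: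
  obtains \<alpha>1 \<beta>1 where "\<alpha>1 \<in> R' \<inter> pos_roots R S" "\<beta>1 \<in> R' \<inter> pos_roots R S"
    "indep2 (coroot \<alpha>1) (coroot \<beta>1)"
    "\<forall>\<gamma>\<in>R' \<inter> pos_roots R S. \<exists>x y. x \<ge> 0 \<and> y \<ge> 0 \<and> coroot \<gamma> = x *\<^sub>R coroot \<alpha>1 + y *\<^sub>R coroot \<beta>1"
proof -
  let ?P = "R' \<inter> pos_roots R S"
  obtain \<alpha>0 \<beta>0 where a0: "\<alpha>0 \<in> ?P" and b0: "\<beta>0 \<in> ?P" and ind: "indep2 (coroot \<alpha>0) (coroot \<beta>0)"
    and spans: "\<forall>\<delta>\<in>R'. coroot \<delta> \<in> span {coroot \<alpha>0, coroot \<beta>0}"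
    by (rule subsystem_indep_pos_coroots)
  define A where "A = coroot \<alpha>0"
  define B where "B = coroot \<beta>0"
  define w where "w = B - ((B \<bullet> A) / (A \<bullet> A)) *\<^sub>R A"
  have A: "A \<noteq> 0" "B \<notin> span {A}" using ind by (simp_all add: indep2_iff_not_in_span A_def B_def)
  have Aw: "A \<bullet> w = 0" using A(1) by (simp add: w_def inner_diff_right inner_commute)
  have "w \<noteq> 0"
  proof
    assume "w = 0"
    then have "B = ((B \<bullet> A) / (A \<bullet> A)) *\<^sub>R A" by (simp add: w_def)
    then show False using A(2) by (metis span_base span_scale singletonI)
  qed
  moreover have "w \<bullet> w = B \<bullet> w" using Aw by (simp add: w_def inner_diff_left)
  ultimately have Bw: "B \<bullet> w > 0" by (metis inner_gt_zero_iff)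
  have ht: "height S A > 0" "height S B > 0"
    using a0 b0 height_coroot_pos[OF RS BS] by (auto simp: A_def B_def)
  let ?X = "coroot ` ?P"
  have "span ?X \<subseteq> span {A, B}"
    by (rule span_minimal) (use spans in \<open>auto simp: A_def B_def\<close>)
  then have sep: "\<forall>v\<in>span ?X. height S v = 0 \<longrightarrow> v \<bullet> w = 0 \<longrightarrow> v = 0"
  proof (intro ballI impI)
    fix v assume "span ?X \<subseteq> span {A, B}" "v \<in> span ?X" "height S v = 0" "v \<bullet> w = 0"
    then obtain a b where v: "v = a *\<^sub>R A + b *\<^sub>R B" using span_pair_comb by blast
    then have "b = 0" using \<open>v \<bullet> w = 0\<close> Aw Bw by (simp add: inner_add_left)
    then have "a = 0" using \<open>height S v = 0\<close> ht v by (simp add: height_scaleR[OF RS BS])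
    then show "v = 0" using v \<open>b = 0\<close> by simp
  qed
  have "\<exists>u1\<in>?X. \<exists>u2\<in>?X. indep2 u1 u2 \<and> (\<forall>x\<in>?X. \<exists>c d. c \<ge> 0 \<and> d \<ge> 0 \<and> x = c *\<^sub>R u1 + d *\<^sub>R u2)"
  proof (rule extreme_slopes_cone[OF linear_height[OF RS BS] bounded_linear.linear[OF bounded_linear_inner_left]])
    show "finite ?X" using finite_roots[OF RS] subsystem_roots by (auto intro: finite_subset)
    show "\<forall>x\<in>?X. height S x > 0" using height_coroot_pos[OF RS BS] by auto
    show "A \<in> ?X" "B \<in> ?X" using a0 b0 by (auto simp: A_def B_def)
    show "A \<bullet> w / height S A < B \<bullet> w / height S B" using Aw Bw ht by simp
  qed (rule sep)
  then show ?thesis using that by blast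
qed
lemma cone_coeff_descent:
  assumes a1: "\<alpha>1 \<in> R' \<inter> pos_roots R S" and b1: "\<beta>1 \<in> R' \<inter> pos_roots R S"
    and ind: "indep2 (coroot \<alpha>1) (coroot \<beta>1)"
    and cone: "\<forall>\<gamma>\<in>R' \<inter> pos_roots R S. \<exists>x y. x \<ge> 0 \<and> y \<ge> 0 \<and> coroot \<gamma> = x *\<^sub>R coroot \<alpha>1 + y *\<^sub>R coroot \<beta>1"
    and g: "\<gamma> \<in> R' \<inter> pos_roots R S" and xy: "x \<ge> 0" "y \<ge> 0" "coroot \<gamma> = x *\<^sub>R coroot \<alpha>1 + y *\<^sub>R coroot \<beta>1"
    and ne: "\<gamma> \<noteq> \<alpha>1" and pp: "pairing \<alpha>1 \<gamma> > 0"
  shows "\<exists>\<gamma>'\<in>R' \<inter> pos_roots R S. \<exists>n0::int. n0 \<ge> 1 \<and> x - of_int n0 \<ge> 0 \<and>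
           coroot \<gamma>' = (x - of_int n0) *\<^sub>R coroot \<alpha>1 + y *\<^sub>R coroot \<beta>1"
proof -
  have gR: "\<gamma> \<in> R'" "\<gamma> \<in> R" and aR: "\<alpha>1 \<in> R'" "\<alpha>1 \<in> R" using g a1 subsystem_roots by auto
  have anz: "\<alpha>1 \<noteq> 0" using root_nonzero[OF RS aR(2)] .
  obtain n0 where n0: "pairing \<alpha>1 \<gamma> = of_int n0" using pairing_root_int[OF RS gR(2) aR(2)] by (metis Ints_cases)
  have n01: "n0 \<ge> 1" using pp n0 by simp
  define \<gamma>' where "\<gamma>' = refl \<alpha>1 \<gamma>"
  have g'R: "\<gamma>' \<in> R'" using subsystem_refl[OF aR(1) gR(1)] by (simp add: \<gamma>'_def)
  have "coroot \<gamma>' = refl \<alpha>1 (coroot \<gamma>)" unfolding \<gamma>'_def by (rule coroot_orthogonal_transformation[OF orthogonal_transformation_refl[OF anz]])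
  also have "\<dots> = coroot \<gamma> - (coroot \<gamma> \<bullet> \<alpha>1) *\<^sub>R coroot \<alpha>1" by (rule refl_conv_coroot)
  also have "coroot \<gamma> \<bullet> \<alpha>1 = of_int n0" using n0 by (simp add: pairing_def inner_commute)
  finally have c': "coroot \<gamma>' = (x - of_int n0) *\<^sub>R coroot \<alpha>1 + y *\<^sub>R coroot \<beta>1"
    using xy(3) by (simp add: algebra_simps)
  have pos: "\<gamma>' \<in> R' \<inter> pos_roots R S"
  proof (rule ccontr)
    assume np: "\<gamma>' \<notin> R' \<inter> pos_roots R S"
    then have "- \<gamma>' \<in> R' \<inter> pos_roots R S" using subsystem_pos_or_neg[OF g'R] by blast
    then obtain x'' y'' where "x'' \<ge> 0" "y'' \<ge> 0" "coroot (- \<gamma>') = x'' *\<^sub>R coroot \<alpha>1 + y'' *\<^sub>R coroot \<beta>1"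
      using cone by blast
    then have "(- x'') *\<^sub>R coroot \<alpha>1 + (- y'') *\<^sub>R coroot \<beta>1 = (x - of_int n0) *\<^sub>R coroot \<alpha>1 + y *\<^sub>R coroot \<beta>1"
      "y'' \<ge> 0" using c' by (auto simp: algebra_simps)
    then have "y = 0" using indep2_coeffs_unique[OF ind] xy(2) by fastforce
    then have "coroot \<gamma> = x *\<^sub>R coroot \<alpha>1" using xy(3) by simp
    then have "\<gamma> = \<alpha>1 \<or> \<gamma> = - \<alpha>1" by (rule coroot_parallel_root_cases[OF RS aR(2) gR(2)])
    moreover have "\<gamma> \<noteq> - \<alpha>1" using pos_root_minus_not_pos[OF RS BS] a1 g by auto
    ultimately show False using ne by simp
  qed
  then obtain x' y' where x'y': "x' \<ge> 0" "y' \<ge> 0" "coroot \<gamma>' = x' *\<^sub>R coroot \<alpha>1 + y' *\<^sub>R coroot \<beta>1"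
    using cone by blast
  have "x' = x - of_int n0" using indep2_coeffs_unique[OF ind] c' x'y'(3) by metis
  then show ?thesis using pos n01 c' x'y'(1) by blast
qed

lemma cone_coeff_step:
  assumes a1: "\<alpha>1 \<in> R' \<inter> pos_roots R S" and b1: "\<beta>1 \<in> R' \<inter> pos_roots R S"
    and ind: "indep2 (coroot \<alpha>1) (coroot \<beta>1)"
    and cone: "\<forall>\<gamma>\<in>R' \<inter> pos_roots R S. \<exists>x y. x \<ge> 0 \<and> y \<ge> 0 \<and> coroot \<gamma> = x *\<^sub>R coroot \<alpha>1 + y *\<^sub>R coroot \<beta>1"
    and g: "\<gamma> \<in> R' \<inter> pos_roots R S" and xy: "x \<ge> 0" "y \<ge> 0" "coroot \<gamma> = x *\<^sub>R coroot \<alpha>1 + y *\<^sub>R coroot \<beta>1"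
    and ne: "\<gamma> \<noteq> \<alpha>1" "\<gamma> \<noteq> \<beta>1"
  shows "\<exists>\<gamma>'\<in>R' \<inter> pos_roots R S. \<exists>n::int. n \<ge> 1 \<and>
    (x - of_int n \<ge> 0 \<and> coroot \<gamma>' = (x - of_int n) *\<^sub>R coroot \<alpha>1 + y *\<^sub>R coroot \<beta>1 \<or>
     y - of_int n \<ge> 0 \<and> coroot \<gamma>' = x *\<^sub>R coroot \<alpha>1 + (y - of_int n) *\<^sub>R coroot \<beta>1)"
proof -
  have nz: "\<gamma> \<noteq> 0" "\<alpha>1 \<noteq> 0" "\<beta>1 \<noteq> 0" using a1 b1 g subsystem_nonzero by auto
  have "2 = \<gamma> \<bullet> coroot \<gamma>" using nz by (simp add: inner_coroot_self)
  also have "\<dots> = x * pairing \<gamma> \<alpha>1 + y * pairing \<gamma> \<beta>1"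
    using xy(3) by (simp add: pairing_def inner_add_right)
  finally have "x * pairing \<gamma> \<alpha>1 > 0 \<or> y * pairing \<gamma> \<beta>1 > 0" by linarith
  then show ?thesis
  proof
    assume "x * pairing \<gamma> \<alpha>1 > 0"
    then have "pairing \<alpha>1 \<gamma> > 0"
      using xy(1) pairing_pos_commute[OF nz(1,2)] by (simp add: zero_less_mult_iff)
    then show ?thesis using cone_coeff_descent[OF a1 b1 ind cone g xy ne(1)] by blast
  next
    assume "y * pairing \<gamma> \<beta>1 > 0"
    then have "pairing \<beta>1 \<gamma> > 0"
      using xy(2) pairing_pos_commute[OF nz(1,3)] by (simp add: zero_less_mult_iff)
    moreover have "\<forall>\<gamma>\<in>R' \<inter> pos_roots R S. \<exists>x y. x \<ge> 0 \<and> y \<ge> 0 \<and> coroot \<gamma> = x *\<^sub>R coroot \<beta>1 + y *\<^sub>R coroot \<alpha>1"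
      using cone by (metis add.commute)
    moreover have "coroot \<gamma> = y *\<^sub>R coroot \<beta>1 + x *\<^sub>R coroot \<alpha>1" using xy(3) by (simp add: add.commute)
    ultimately obtain \<gamma>' and n :: int where "\<gamma>' \<in> R' \<inter> pos_roots R S" "n \<ge> 1" "y - of_int n \<ge> 0"
      "coroot \<gamma>' = (y - of_int n) *\<^sub>R coroot \<beta>1 + x *\<^sub>R coroot \<alpha>1"
      using cone_coeff_descent[OF b1 a1 indep2_commute[OF ind] _ g xy(2,1) _ ne(2)] by blast
    then show ?thesis by (intro bexI[of _ \<gamma>'] exI[of _ n]) (simp_all add: add.commute)
  qed
qed

lemma coroot_cone_coeffs_int:
  assumes a1: "\<alpha>1 \<in> R' \<inter> pos_roots R S" and b1: "\<beta>1 \<in> R' \<inter> pos_roots R S"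
    and ind: "indep2 (coroot \<alpha>1) (coroot \<beta>1)"
    and cone: "\<forall>\<gamma>\<in>R' \<inter> pos_roots R S. \<exists>x y. x \<ge> 0 \<and> y \<ge> 0 \<and> coroot \<gamma> = x *\<^sub>R coroot \<alpha>1 + y *\<^sub>R coroot \<beta>1"
  shows "\<gamma> \<in> R' \<inter> pos_roots R S \<Longrightarrow> x \<ge> 0 \<Longrightarrow> y \<ge> 0 \<Longrightarrow> coroot \<gamma> = x *\<^sub>R coroot \<alpha>1 + y *\<^sub>R coroot \<beta>1
     \<Longrightarrow> x + y \<le> of_nat n \<Longrightarrow> x \<in> \<int> \<and> y \<in> \<int>"
proof (induction n arbitrary: \<gamma> x y)
  case 0
  then have "x = 0" "y = 0" by auto
  then show ?case by simp
next
  case (Suc n)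
  show ?case
  proof (cases "\<gamma> = \<alpha>1 \<or> \<gamma> = \<beta>1")
    case True
    then have "x *\<^sub>R coroot \<alpha>1 + y *\<^sub>R coroot \<beta>1 = 1 *\<^sub>R coroot \<alpha>1 + 0 *\<^sub>R coroot \<beta>1 \<or>
        x *\<^sub>R coroot \<alpha>1 + y *\<^sub>R coroot \<beta>1 = 0 *\<^sub>R coroot \<alpha>1 + 1 *\<^sub>R coroot \<beta>1"
      using Suc.prems(4) by auto
    then show ?thesis using indep2_coeffs_unique[OF ind] by fastforce
  next
    case False
    then obtain \<gamma>' and n0 :: int where "\<gamma>' \<in> R' \<inter> pos_roots R S" "n0 \<ge> 1"
      "x - of_int n0 \<ge> 0 \<and> coroot \<gamma>' = (x - of_int n0) *\<^sub>R coroot \<alpha>1 + y *\<^sub>R coroot \<beta>1 \<or>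
       y - of_int n0 \<ge> 0 \<and> coroot \<gamma>' = x *\<^sub>R coroot \<alpha>1 + (y - of_int n0) *\<^sub>R coroot \<beta>1"
      using cone_coeff_step[OF a1 b1 ind cone Suc.prems(1-4)] by blast
    moreover have "(x - of_int n0) + y \<le> of_nat n" "x + (y - of_int n0) \<le> of_nat n"
      using Suc.prems(5) \<open>n0 \<ge> 1\<close> by simp_all
    ultimately have "x - of_int n0 \<in> \<int> \<and> y \<in> \<int> \<or> x \<in> \<int> \<and> y - of_int n0 \<in> \<int>"
      using Suc.IH Suc.prems(2,3) by blast
    then show ?thesis by (metis Ints_add Ints_of_int diff_add_cancel)
  qed
qed

lemma subsystem_pos_coroot_int_cone:
  obtains \<alpha>1 \<beta>1 where "\<alpha>1 \<in> R' \<inter> pos_roots R S" "\<beta>1 \<in> R' \<inter> pos_roots R S"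
    "indep2 (coroot \<alpha>1) (coroot \<beta>1)"
    "\<forall>\<gamma>\<in>R' \<inter> pos_roots R S. \<exists>a b::int. a \<ge> 0 \<and> b \<ge> 0 \<and>
       coroot \<gamma> = of_int a *\<^sub>R coroot \<alpha>1 + of_int b *\<^sub>R coroot \<beta>1"
proof -
  obtain \<alpha>1 \<beta>1 where a1: "\<alpha>1 \<in> R' \<inter> pos_roots R S" and b1: "\<beta>1 \<in> R' \<inter> pos_roots R S"
    and ind: "indep2 (coroot \<alpha>1) (coroot \<beta>1)"
    and cone: "\<forall>\<gamma>\<in>R' \<inter> pos_roots R S. \<exists>x y. x \<ge> 0 \<and> y \<ge> 0 \<and> coroot \<gamma> = x *\<^sub>R coroot \<alpha>1 + y *\<^sub>R coroot \<beta>1"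
    by (rule subsystem_pos_coroot_cone)
  have "\<exists>a b::int. a \<ge> 0 \<and> b \<ge> 0 \<and> coroot \<gamma> = of_int a *\<^sub>R coroot \<alpha>1 + of_int b *\<^sub>R coroot \<beta>1"
    if g: "\<gamma> \<in> R' \<inter> pos_roots R S" for \<gamma>
  proof -
    obtain x y where xy: "x \<ge> 0" "y \<ge> 0" "coroot \<gamma> = x *\<^sub>R coroot \<alpha>1 + y *\<^sub>R coroot \<beta>1" using cone g by blast
    have "x + y \<le> of_nat (nat (ceiling (x + y)))" by linarith
    then have "x \<in> \<int> \<and> y \<in> \<int>" using coroot_cone_coeffs_int[OF a1 b1 ind cone g xy] by blast
    then obtain a b where "x = of_int a" "y = of_int b" by (metis Ints_cases)
    then show ?thesis using xy by auto
  qed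
  then show ?thesis using that a1 b1 ind by blast
qed

end

lemma indep2_gram_det_pos:
  fixes A B :: "'a::euclidean_space"
  assumes "indep2 A B"
  shows "(A \<bullet> A) * (B \<bullet> B) - (A \<bullet> B) * (A \<bullet> B) > 0"
proof -
  have An: "A \<noteq> 0"
  proof
    assume "A = 0" then have "1 *\<^sub>R A + 0 *\<^sub>R B = 0" by simp
    then show False using assms unfolding indep2_def by fastforce
  qed
  then have G: "A \<bullet> A > 0" by simp
  define w where "w = B - ((A \<bullet> B) / (A \<bullet> A)) *\<^sub>R A"
  have wn: "w \<noteq> 0"
  proof
    assume "w = 0"
    then have "(- ((A \<bullet> B) / (A \<bullet> A))) *\<^sub>R A + 1 *\<^sub>R B = 0" by (simp add: w_def)
    then show False using assms unfolding indep2_def by fastforce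
  qed
  have "w \<bullet> w = B \<bullet> B - (A \<bullet> B) * (A \<bullet> B) / (A \<bullet> A)"
    using G by (simp add: w_def inner_diff_left inner_diff_right inner_commute algebra_simps power2_eq_square)
  moreover have "w \<bullet> w > 0" using wn by simp
  ultimately have "B \<bullet> B - (A \<bullet> B) * (A \<bullet> B) / (A \<bullet> A) > 0" by simp
  then have "(A \<bullet> A) * (B \<bullet> B - (A \<bullet> B) * (A \<bullet> B) / (A \<bullet> A)) > 0" using G by simp
  then show ?thesis using G by (simp add: algebra_simps)
qed

lemma indep2_inner_solvable:
  fixes A B :: "'a::euclidean_space"
  assumes "indep2 A B"
  shows "\<exists>P. P \<bullet> A = c1 \<and> P \<bullet> B = c2"
proof -
  define G where "G = A \<bullet> A"
  define H where "H = A \<bullet> B"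
  define K where "K = B \<bullet> B"
  define d where "d = G * K - H * H"
  have dp: "d > 0" using indep2_gram_det_pos[OF assms] by (simp add: d_def G_def H_def K_def)
  define P where "P = ((c1 * K - c2 * H) / d) *\<^sub>R A + ((c2 * G - c1 * H) / d) *\<^sub>R B"
  have BA: "B \<bullet> A = H" by (simp add: H_def inner_commute)
  have "P \<bullet> A = ((c1 * K - c2 * H) / d) * G + ((c2 * G - c1 * H) / d) * H"
    by (simp add: P_def inner_add_left BA G_def)
  also have "\<dots> = ((c1 * K - c2 * H) * G + (c2 * G - c1 * H) * H) / d" by (simp add: add_divide_distrib)
  also have "\<dots> = c1" using dp by (simp add: d_def field_simps)
  finally have 1: "P \<bullet> A = c1" .
  have "P \<bullet> B = ((c1 * K - c2 * H) / d) * H + ((c2 * G - c1 * H) / d) * K"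
    by (simp add: P_def inner_add_left K_def H_def)
  also have "\<dots> = ((c1 * K - c2 * H) * H + (c2 * G - c1 * H) * K) / d" by (simp add: add_divide_distrib)
  also have "\<dots> = c2" using dp by (simp add: d_def field_simps)
  finally have 2: "P \<bullet> B = c2" .
  show ?thesis using 1 2 by blast
qed

section \<open>The block of a \<lambda>-chain\<close>

text \<open>
  Positions in \<Gamma> are 0-based: the paper's indices before the block become 0..t-1 and its block [q]
  becomes t..t+q-1. The maps u and uh are the paper's u and u-hat, v and vh the corresponding
  products over the block (so w = u \<circ> v); occ_before \<gamma> is l_i for a block entry \<gamma> = \<Gamma> ! i, and
  block_level k is m_k.
\<close>

locale lambda_chain_block =
  fixes R S :: "'a::euclidean_space set" and lam :: 'a and \<Gamma> :: "'a list"
    and t q :: nat and R' :: "'a set" and J :: "nat set"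
  assumes RS: "root_system R" and BS: "is_base R S"
    and DOM: "dominant R S lam" and LC: "lambda_chain R S lam \<Gamma>"
    and block_length: "t + q \<le> length \<Gamma>"
    and SUB: "root_subsystem R R'" and D2: "dim R' = 2"
    and block_distinct: "distinct (take q (drop t \<Gamma>))"
    and block_set: "set (take q (drop t \<Gamma>)) = R' \<inter> pos_roots R S"
    and ADM: "admissible R S \<Gamma> J"
begin

abbreviation "alc \<equiv> chain_alcoves R S \<Gamma>"

abbreviation "pos' \<equiv> R' \<inter> pos_roots R S"

definition occ_before :: "'a \<Rightarrow> nat" where
  "occ_before \<gamma> = card {j. j < t \<and> \<Gamma> ! j = \<gamma>}"

lemma block_nth: "i < q \<Longrightarrow> take q (drop t \<Gamma>) ! i = \<Gamma> ! (t + i)"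
  using block_length by simp

lemma block_nth_pos: "i < q \<Longrightarrow> \<Gamma> ! (t + i) \<in> pos'"
proof -
  assume i: "i < q"
  then have "take q (drop t \<Gamma>) ! i \<in> set (take q (drop t \<Gamma>))"
    using block_length by (intro nth_mem) simp
  then show ?thesis using block_set block_nth[OF i] by simp
qed

lemma block_pos_obtain:
  assumes "\<gamma> \<in> pos'" obtains i where "i < q" "\<Gamma> ! (t + i) = \<gamma>"
proof -
  have "\<gamma> \<in> set (take q (drop t \<Gamma>))" using assms block_set by simp
  then obtain i where "i < length (take q (drop t \<Gamma>))" "take q (drop t \<Gamma>) ! i = \<gamma>"
    by (auto simp: in_set_conv_nth)
  moreover from this have "i < q" by simp
  ultimately show ?thesis using that block_nth by simp
qed

lemma block_nth_eq_iff: "i < q \<Longrightarrow> j < q \<Longrightarrow> \<Gamma> ! (t + i) = \<Gamma> ! (t + j) \<longleftrightarrow> i = j"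
  using nth_eq_iff_index_eq[OF block_distinct, of i j] block_nth[of i] block_nth[of j] block_length
  by simp

lemma occurrences_before_block_entry:
  assumes i: "i < q"
  shows "{j. j < t + i \<and> \<Gamma> ! j = \<Gamma> ! (t + i)} = {j. j < t \<and> \<Gamma> ! j = \<Gamma> ! (t + i)}"
proof -
  have "j < t" if j: "j < t + i" "\<Gamma> ! j = \<Gamma> ! (t + i)" for j
  proof (rule ccontr)
    assume "\<not> j < t"
    then have "j - t < q" "j - t \<noteq> i" "t + (j - t) = j" using i j(1) by auto
    then show False using block_nth_eq_iff[of "j - t" i] i j(2) by simp
  qed
  then show ?thesis by auto
qed

lemma lcount_block: "i < q \<Longrightarrow> lcount \<Gamma> (t + i) = occ_before (\<Gamma> ! (t + i))"
  by (simp add: lcount_def occ_before_def occurrences_before_block_entry)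

lemma occurrences_through_block:
  assumes "\<gamma> \<in> pos'" shows "card {j. j < t + q \<and> \<Gamma> ! j = \<gamma>} = Suc (occ_before \<gamma>)"
proof -
  obtain i where i: "i < q" "\<Gamma> ! (t + i) = \<gamma>" using assms by (rule block_pos_obtain)
  have "j < t \<or> j = t + i" if j: "j < t + q" "\<Gamma> ! j = \<gamma>" for j
  proof (rule ccontr)
    assume "\<not> (j < t \<or> j = t + i)"
    then have "j - t < q" "j - t \<noteq> i" "t + (j - t) = j" using j(1) by auto
    then show False using block_nth_eq_iff[of "j - t" i] i j(2) by simp
  qed
  then have "{j. j < t + q \<and> \<Gamma> ! j = \<gamma>} = insert (t + i) {j. j < t \<and> \<Gamma> ! j = \<gamma>}"
    using i by auto
  then show ?thesis by (simp add: occ_before_def)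
qed

lemma chain_nonempty: "0 < length \<Gamma>"
proof -
  obtain \<gamma> where "\<gamma> \<in> pos'" using subsystem_pos_roots_nonempty[OF RS BS SUB D2] by blast
  then obtain i where "i < q" by (rule block_pos_obtain)
  then show ?thesis using block_length by linarith
qed

lemma alcove_alc: "n \<le> length \<Gamma> \<Longrightarrow> is_alcove R (alc n)"
  using is_alcove_chain_alcoves[OF RS LC DOM _ chain_nonempty] .

lemma alc_nonempty: "n \<le> length \<Gamma> \<Longrightarrow> alc n \<noteq> {}"
  using alcove_nonempty[OF RS alcove_alc] .

lemma pairing_before_block:
  assumes "\<gamma> \<in> pos'" "x \<in> alc t"
  shows "- real (occ_before \<gamma>) < pairing x \<gamma> \<and> pairing x \<gamma> < 1 - real (occ_before \<gamma>)"
proof -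
  have "alcove_level (alc t) \<gamma> = - int (occ_before \<gamma>)"
    using chain_level_pos_root[OF RS LC DOM chain_nonempty, of \<gamma> t] assms(1) block_length
    by (simp add: occ_before_def)
  moreover have "\<gamma> \<in> R" using assms(1) subsystem_roots[OF RS BS SUB D2] by blast
  ultimately show ?thesis
    using alcove_level_bounds[OF RS alcove_alc assms(2), of \<gamma>] block_length by auto
qed

lemma pairing_after_block:
  assumes "\<gamma> \<in> pos'" "x \<in> alc (t + q)"
  shows "- real (occ_before \<gamma>) - 1 < pairing x \<gamma> \<and> pairing x \<gamma> < - real (occ_before \<gamma>)"
proof -
  have "alcove_level (alc (t + q)) \<gamma> = - int (occ_before \<gamma>) - 1"
    using chain_level_pos_root[OF RS LC DOM chain_nonempty, of \<gamma> "t + q"] assms(1) block_length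
      occurrences_through_block[OF assms(1)] by simp
  moreover have "\<gamma> \<in> R" using assms(1) subsystem_roots[OF RS BS SUB D2] by blast
  ultimately show ?thesis
    using alcove_level_bounds[OF RS alcove_alc assms(2), of \<gamma>] block_length by auto
qed

text \<open>
  Solve for z on two coroots spanning the positive cone; for any other positive root the integer
  pairing z \<gamma> + l is squeezed into (-1,1) by the alcoves just before and just after the block.
\<close>

lemma block_common_vertex:
  obtains z where "\<forall>\<gamma>\<in>pos'. pairing z \<gamma> = - real (occ_before \<gamma>)"
proof -
  obtain \<alpha>1 \<beta>1 where a1: "\<alpha>1 \<in> pos'" and b1: "\<beta>1 \<in> pos'" and ind: "indep2 (coroot \<alpha>1) (coroot \<beta>1)"
    and int_cone: "\<forall>\<gamma>\<in>pos'. \<exists>a b::int. a \<ge> 0 \<and> b \<ge> 0 \<and>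
       coroot \<gamma> = of_int a *\<^sub>R coroot \<alpha>1 + of_int b *\<^sub>R coroot \<beta>1"
    by (rule subsystem_pos_coroot_int_cone[OF RS BS SUB D2])
  obtain z where z1: "z \<bullet> coroot \<alpha>1 = - real (occ_before \<alpha>1)"
    and z2: "z \<bullet> coroot \<beta>1 = - real (occ_before \<beta>1)"
    using indep2_inner_solvable[OF ind] by blast
  obtain x0 where x0: "x0 \<in> alc t" using alc_nonempty block_length by fastforce
  obtain y0 where y0: "y0 \<in> alc (t + q)" using alc_nonempty block_length by fastforce
  have "pairing z \<gamma> = - real (occ_before \<gamma>)" if g: "\<gamma> \<in> pos'" for \<gamma>
  proof -
    obtain a b :: int where ab: "a \<ge> 0" "b \<ge> 0"
      "coroot \<gamma> = of_int a *\<^sub>R coroot \<alpha>1 + of_int b *\<^sub>R coroot \<beta>1"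
      using int_cone g by blast
    have lin: "pairing x \<gamma> = of_int a * pairing x \<alpha>1 + of_int b * pairing x \<beta>1" for x
      using ab(3) by (simp add: pairing_def inner_add_right)
    define M where "M = - a * int (occ_before \<alpha>1) - b * int (occ_before \<beta>1) + int (occ_before \<gamma>)"
    have "real_of_int M < 1"
      using lin[of x0] pairing_before_block[OF _ x0] g a1 b1 ab(1,2)
        mult_left_mono[of "- real (occ_before \<alpha>1)" "pairing x0 \<alpha>1" "of_int a"]
        mult_left_mono[of "- real (occ_before \<beta>1)" "pairing x0 \<beta>1" "of_int b"]
      by (force simp: M_def)
    moreover have "real_of_int M > -1"
      using lin[of y0] pairing_after_block[OF _ y0] g a1 b1 ab(1,2)
        mult_left_mono[of "pairing y0 \<alpha>1" "- real (occ_before \<alpha>1)" "of_int a"]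
        mult_left_mono[of "pairing y0 \<beta>1" "- real (occ_before \<beta>1)" "of_int b"]
      by (force simp: M_def)
    ultimately have "M = 0" by linarith
    then have "real_of_int M = 0" by simp
    then show ?thesis using lin[of z] z1 z2 by (simp add: pairing_def M_def)
  qed
  then show ?thesis using that by blast
qed

definition "u = prodJ (r_at \<Gamma>) (J \<inter> {..<t})"
definition "uh = prodJ (rhat_at \<Gamma>) (J \<inter> {..<t})"
definition "v = prodJ (r_at \<Gamma>) (J \<inter> {t..<t + q})"
definition "vh = prodJ (rhat_at \<Gamma>) (J \<inter> {t..<t + q})"

lemma finite_J: "finite J"
  using ADM finite_subset by (auto simp: admissible_def)

lemma J_roots_nonzero: "\<forall>j\<in>J. \<Gamma> ! j \<noteq> 0"
  using ADM lambda_chain_edge[OF RS LC DOM] root_nonzero[OF RS] by (auto simp: admissible_def)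

lemma u_affine: "orthogonal_transformation u" "uh x = u x + uh 0"
  unfolding u_def uh_def using J_roots_nonzero finite_J
  by (auto intro: prodJ_rhat_at_affine[of "J \<inter> {..<t}"])

lemma v_affine: "orthogonal_transformation v" "vh x = v x + vh 0"
  unfolding v_def vh_def using J_roots_nonzero finite_J
  by (auto intro: prodJ_rhat_at_affine[of "J \<inter> {t..<t + q}"])

lemma prodJ_through_block:
  "prodJ (r_at \<Gamma>) (J \<inter> {..<t + q}) = u \<circ> v" "prodJ (rhat_at \<Gamma>) (J \<inter> {..<t + q}) = uh \<circ> vh"
  using prodJ_split[OF finite_J, of t "t + q"] by (auto simp: u_def v_def uh_def vh_def)

lemma galleryJ_before_block: "galleryJ R S \<Gamma> J t = uh ` alc t"
  by (simp add: galleryJ_def uh_def)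

lemma galleryJ_after_block: "galleryJ R S \<Gamma> J (t + q) = (uh \<circ> vh) ` alc (t + q)"
  by (simp add: galleryJ_def prodJ_through_block)

lemma vh_fixes_vertex:
  assumes "\<forall>\<gamma>\<in>pos'. pairing z \<gamma> = - real (occ_before \<gamma>)"
  shows "vh z = z"
  unfolding vh_def
proof (rule prodJ_fixed_point)
  show "\<forall>j\<in>J \<inter> {t..<t + q}. rhat_at \<Gamma> j z = z"
  proof
    fix j assume j: "j \<in> J \<inter> {t..<t + q}"
    then have i: "j - t < q" and ji: "j = t + (j - t)" by auto
    have "pairing z (\<Gamma> ! j) = - real (lcount \<Gamma> j)"
      using assms block_nth_pos[OF i] lcount_block[OF i] ji by metis
    then show "rhat_at \<Gamma> j z = z" unfolding rhat_at_def by (rule aff_refl_fixed)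
  qed
qed (simp add: finite_J)

lemma v_permutes_subsystem: "v ` R' = R'"
proof (rule endo_inj_surj)
  show "finite R'" using finite_roots[OF RS] subsystem_roots[OF RS BS SUB D2] finite_subset by blast
  show "v ` R' \<subseteq> R'" unfolding v_def
  proof (intro image_subsetI prodJ_preserves ballI)
    fix j x assume j: "j \<in> J \<inter> {t..<t + q}" and "x \<in> R'"
    then have "j - t < q" "j = t + (j - t)" by auto
    then have "\<Gamma> ! j \<in> R'" using block_nth_pos[of "j - t"] by simp
    then show "r_at \<Gamma> j x \<in> R'" unfolding r_at_def using subsystem_refl[OF RS BS SUB D2] \<open>x \<in> R'\<close> by blast
  qed (simp_all add: finite_J)
  show "inj_on v R'" using orthogonal_transformation_inj[OF v_affine(1)] by (simp add: inj_on_def inj_def)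
qed

definition "block_level k = pairing (uh 0) (u (\<Gamma> ! (t + k))) - real (occ_before (\<Gamma> ! (t + k)))"

lemma image_hyp_block_root:
  assumes k: "k < q"
  shows "uh ` hyp (\<Gamma> ! (t + k)) (- real (lcount \<Gamma> (t + k))) = hyp (u (\<Gamma> ! (t + k))) (block_level k)"
  using affine_isometry_image_hyp[OF u_affine] lcount_block[OF k] by (simp add: block_level_def)

lemma the_image_hyp_level:
  assumes k: "k < q"
  shows "(THE m. uh ` hyp (\<Gamma> ! (t + k)) (- real (lcount \<Gamma> (t + k))) = hyp (u (\<Gamma> ! (t + k))) m)
    = block_level k"
proof (rule the_equality)
  fix m assume "uh ` hyp (\<Gamma> ! (t + k)) (- real (lcount \<Gamma> (t + k))) = hyp (u (\<Gamma> ! (t + k))) m"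
  moreover have "u (\<Gamma> ! (t + k)) \<noteq> 0"
    using orthogonal_transformation_inj[OF u_affine(1)] linear_0[OF orthogonal_transformation_linear[OF u_affine(1)]]
      subsystem_nonzero[OF RS BS SUB D2] block_nth_pos[OF k] by (metis IntD1 injD)
  ultimately show "m = block_level k" using image_hyp_block_root[OF k] hyp_eq_imp_level_eq by metis
qed (rule image_hyp_block_root[OF k])

lemma pairing_gallery_before_block:
  assumes k: "k < q" and \<nu>: "\<nu> \<in> galleryJ R S \<Gamma> J t"
  shows "block_level k < pairing \<nu> (u (\<Gamma> ! (t + k))) \<and> pairing \<nu> (u (\<Gamma> ! (t + k))) < block_level k + 1"
proof -
  obtain x where x: "x \<in> alc t" "\<nu> = uh x" using \<nu> by (auto simp: galleryJ_before_block)
  show ?thesis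
    using pairing_before_block[OF block_nth_pos[OF k] x(1)] pairing_affine_isometry[OF u_affine, of x]
    by (simp add: x(2) block_level_def)
qed

lemma pairing_gallery_after_block:
  assumes k: "k < q"
  obtains \<delta> where "\<delta> \<in> R'" "v \<delta> = \<Gamma> ! (t + k)"
    "\<delta> \<in> pos_roots R S \<Longrightarrow> \<forall>\<nu>\<in>galleryJ R S \<Gamma> J (t + q).
       block_level k - 1 < pairing \<nu> (u (\<Gamma> ! (t + k))) \<and> pairing \<nu> (u (\<Gamma> ! (t + k))) < block_level k"
    "- \<delta> \<in> pos_roots R S \<Longrightarrow> \<forall>\<nu>\<in>galleryJ R S \<Gamma> J (t + q).
       block_level k < pairing \<nu> (u (\<Gamma> ! (t + k))) \<and> pairing \<nu> (u (\<Gamma> ! (t + k))) < block_level k + 1"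
proof -
  let ?\<beta> = "\<Gamma> ! (t + k)"
  obtain z where z: "\<forall>\<gamma>\<in>pos'. pairing z \<gamma> = - real (occ_before \<gamma>)" by (rule block_common_vertex)
  obtain \<delta> where \<delta>: "\<delta> \<in> R'" "v \<delta> = ?\<beta>"
    using v_permutes_subsystem block_nth_pos[OF k] by (metis IntD1 imageE)
  have vh_shift: "vh y - z = v (y - z)" for y
  proof -
    have "vh y - vh z = v y - v z" using v_affine(2)[of y] v_affine(2)[of z] by simp
    then show ?thesis
      using vh_fixes_vertex[OF z] linear_diff[OF orthogonal_transformation_linear[OF v_affine(1)]] by simp
  qed
  have "pairing (vh y) ?\<beta> = pairing (y - z) \<delta> - real (occ_before ?\<beta>)" for y
  proof -
    have "pairing (vh y) ?\<beta> = pairing (vh y - z) ?\<beta> + pairing z ?\<beta>" by (simp add: pairing_diff_left)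
    also have "pairing (vh y - z) ?\<beta> = pairing (y - z) \<delta>"
      unfolding vh_shift \<delta>(2)[symmetric] by (rule pairing_orthogonal_transformation[OF v_affine(1)])
    also have "pairing z ?\<beta> = - real (occ_before ?\<beta>)" using z block_nth_pos[OF k] by blast
    finally show ?thesis by simp
  qed
  then have level: "pairing ((uh \<circ> vh) y) (u ?\<beta>) = pairing (y - z) \<delta> + block_level k" for y
    using pairing_affine_isometry[OF u_affine, of "vh y"] by (simp add: block_level_def)
  have pos: "- 1 < pairing (y - z) \<delta> \<and> pairing (y - z) \<delta> < 0"
    if "\<delta> \<in> pos_roots R S" "y \<in> alc (t + q)" for y
  proof -
    have d: "\<delta> \<in> pos'" using \<delta>(1) that(1) by simp
    show ?thesis
      using pairing_after_block[OF d that(2)] bspec[OF z d] by (simp add: pairing_diff_left)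
  qed
  have neg: "0 < pairing (y - z) \<delta> \<and> pairing (y - z) \<delta> < 1"
    if "- \<delta> \<in> pos_roots R S" "y \<in> alc (t + q)" for y
  proof -
    have d: "- \<delta> \<in> pos'" using subsystem_minus[OF RS BS SUB D2 \<delta>(1)] that(1) by simp
    show ?thesis
      using pairing_after_block[OF d that(2)] bspec[OF z d] by (simp add: pairing_diff_left)
  qed
  show ?thesis
    by (rule that[OF \<delta>]) (use level pos neg in \<open>auto simp: galleryJ_after_block\<close>)
qed

lemma folded_galleries_sides:
  assumes k: "k < q" and a: "u (\<Gamma> ! (t + k)) = a \<or> u (\<Gamma> ! (t + k)) = - a"
  shows "(inv u a \<in> pos_roots R S \<longleftrightarrow>
            galleryJ R S \<Gamma> J t \<subseteq> {\<nu>. pairing \<nu> a > sgn_root R S (inv u a) * block_level k}) \<and>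
         (- inv (u \<circ> v) a \<in> pos_roots R S \<longleftrightarrow>
            galleryJ R S \<Gamma> J (t + q) \<subseteq> {\<nu>. pairing \<nu> a > sgn_root R S (inv u a) * block_level k})"
proof -
  let ?\<beta> = "\<Gamma> ! (t + k)" and ?G = "galleryJ R S \<Gamma> J t" and ?G' = "galleryJ R S \<Gamma> J (t + q)"
  obtain \<delta> where \<delta>: "\<delta> \<in> R'" "v \<delta> = ?\<beta>"
    and after_pos: "\<delta> \<in> pos_roots R S \<Longrightarrow> \<forall>\<nu>\<in>?G'.
       block_level k - 1 < pairing \<nu> (u ?\<beta>) \<and> pairing \<nu> (u ?\<beta>) < block_level k"
    and after_neg: "- \<delta> \<in> pos_roots R S \<Longrightarrow> \<forall>\<nu>\<in>?G'.
       block_level k < pairing \<nu> (u ?\<beta>) \<and> pairing \<nu> (u ?\<beta>) < block_level k + 1"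
    using pairing_gallery_after_block[OF k] by blast
  note before = pairing_gallery_before_block[OF k]
  have \<beta>: "?\<beta> \<in> pos_roots R S" "- ?\<beta> \<notin> pos_roots R S"
    using block_nth_pos[OF k] pos_root_minus_not_pos[OF RS BS] by auto
  have \<delta>_sign: "\<delta> \<in> pos_roots R S \<longleftrightarrow> - \<delta> \<notin> pos_roots R S"
    using subsystem_pos_or_neg[OF RS BS SUB D2 \<delta>(1)] pos_root_minus_not_pos[OF RS BS, of \<delta>] by auto
  have nonempty: "?G \<noteq> {}" "?G' \<noteq> {}"
    using alc_nonempty block_length by (simp_all add: galleryJ_before_block galleryJ_after_block)
  have inj: "inj u" "inj (u \<circ> v)"
    using orthogonal_transformation_inj u_affine(1) v_affine(1) by (auto intro: inj_compose)
  have lin: "u (- x) = - u x" "v (- x) = - v x" for x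
    using linear_neg orthogonal_transformation_linear u_affine(1) v_affine(1) by blast+
  from a show ?thesis
  proof
    assume a: "u ?\<beta> = a"
    have "inv u a = ?\<beta>" using inv_f_f[OF inj(1)] a by auto
    moreover have "inv (u \<circ> v) a = \<delta>" using inv_f_f[OF inj(2), of \<delta>] a \<delta>(2) by simp
    ultimately show ?thesis
      using \<beta> \<delta>_sign before after_pos after_neg nonempty a by (fastforce simp: sgn_root_def)
  next
    assume a: "u ?\<beta> = - a"
    have "inv u a = - ?\<beta>" using inv_f_f[OF inj(1), of "- ?\<beta>"] a lin(1) by simp
    moreover have "inv (u \<circ> v) a = - \<delta>" using inv_f_f[OF inj(2), of "- \<delta>"] a \<delta>(2) lin by simp
    ultimately show ?thesis
      using \<beta> \<delta>_sign before after_pos after_neg nonempty a by (fastforce simp: sgn_root_def)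
  qed
qed

end

theorem lemma4p4:
  fixes R S :: "'a::euclidean_space set" and lam a :: 'a and \<Gamma> :: "'a list"
    and t q k :: nat and J :: "nat set"
  assumes "root_system R" and "irreducible_rs R" and "is_base R S"
    and "dominant R S lam" and "lambda_chain R S lam \<Gamma>"
    and "t + q \<le> length \<Gamma>"
    and "\<exists>R'. root_subsystem R R' \<and> dim R' = 2 \<and> distinct (take q (drop t \<Gamma>)) \<and>
               set (take q (drop t \<Gamma>)) = R' \<inter> pos_roots R S"
    and "admissible R S \<Gamma> J"
    and "a \<in> insert (- highest_root R S) S"
    and "k < q"
    and "prodJ (r_at \<Gamma>) (J \<inter> {..<t}) (\<Gamma> ! (t + k)) = a \<or>
         prodJ (r_at \<Gamma>) (J \<inter> {..<t}) (\<Gamma> ! (t + k)) = - a"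
  shows "let u = prodJ (r_at \<Gamma>) (J \<inter> {..<t});
             w = prodJ (r_at \<Gamma>) (J \<inter> {..<t + q});
             uhat = prodJ (rhat_at \<Gamma>) (J \<inter> {..<t});
             m = (THE m. uhat ` hyp (\<Gamma> ! (t + k)) (- real (lcount \<Gamma> (t + k)))
                         = hyp (u (\<Gamma> ! (t + k))) m);
             c = sgn_root R S (inv u a) * m;
             posside = {\<nu>. pairing \<nu> a > c}
         in (inv u a \<in> pos_roots R S \<longleftrightarrow> galleryJ R S \<Gamma> J t \<subseteq> posside) \<and>
            (- inv w a \<in> pos_roots R S \<longleftrightarrow> galleryJ R S \<Gamma> J (t + q) \<subseteq> posside)"
proof -
  obtain R' where "root_subsystem R R'" "dim R' = 2" "distinct (take q (drop t \<Gamma>))"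
    "set (take q (drop t \<Gamma>)) = R' \<inter> pos_roots R S"
    using assms(7) by blast
  then interpret lambda_chain_block R S lam \<Gamma> t q R' J
    using assms by unfold_locales
  show ?thesis
    using folded_galleries_sides[OF assms(10,11)[folded u_def]] the_image_hyp_level[OF assms(10)]
    unfolding Let_def prodJ_through_block(1) u_def[symmetric] uh_def[symmetric] by simp
qed

end
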